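(* Let $f:\subseteq X\to\mathbb{N}$ and $f_{\mathbb S}:\subseteq X\to\mathbb{S}$ be single-valued problems that are not constant on their domains. Then (1) $f'$ is co-complete and co-total; (2) $f_{\mathbb S}'$ is co-complete.
   Context: Represented space $(X,\delta_X)$: set with surjective partial $\delta_X:\subseteq\mathbb{N}^\mathbb{N}\to X$. $\mathbb{N}$ is represented by $p\mapsto p(0)$; Sierpiński space $\mathbb{S}=\{0,1\}$ is represented by $\delta_{\mathbb S}(p)=0\iff p=000\dots$. A problem $f:\subseteq X\rightrightarrows Y$ is a partial multi-valued map with nonempty values on its domain; $F\vdash f$ means $\delta_YF(p)\in f(\delta_X(p))$ whenever $\delta_X(p)\in\mathrm{dom}(f)$. $f\le_W g$ iff there are computable partial $H,K:\subseteq\mathbb{N}^\mathbb{N}\to\mathbb{N}^\mathbb{N}$ with $H\langle\mathrm{id},GK\rangle\vdash f$ for all $G\vdash g$ (where $\langle p,q\rangle(2n)=p(n),\langle p,q\rangle(2n+1)=q(n)$). $\lim:\subseteq\mathbb{N}^\mathbb{N}\to\mathbb{N}^\mathbb{N}$ maps $\langle p_0,p_1,\dots\rangle$ to $\lim_n p_n$; the jump $f'$ of $f:\subseteq X\rightrightarrows Y$ is the same map with input representation $\delta_X\circ\lim$. For $p\in\mathbb{N}^\mathbb{N}$, $p-1$ is the concatenation of $p(0)-1,p(1)-1,\dots$ with $0-1$ the empty word; the completion of $(X,\delta_X)$ is $\overline X=X\cup\{\bot\}$ with $\delta_{\overline X}(p)=\delta_X(p-1)$ if $p-1$ is an infinite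 sequence in $\mathrm{dom}(\delta_X)$ and $\bot$ otherwise. For $g:\subseteq U\rightrightarrows V$: $\overline g:\overline U\rightrightarrows\overline V$ equals $g$ on $\mathrm{dom}(g)$ and $\overline V$ elsewhere; $\mathsf Tg:U\rightrightarrows V$ equals $g$ on $\mathrm{dom}(g)$ and $V$ elsewhere. A problem $h$ is co-complete if for all problems $g$: $h\le_W\overline g\iff h\le_W g$; it is co-total if for all problems $g$: $h\le_W\mathsf Tg\iff h\le_W g$. *)

theory Defs
  imports Main "HOL-Library.Nat_Bijection" "HOL-Library.Infinite_Set"
begin

datatype recf = Zr | Sc | Proj nat | Comp recf "recf list" | Prec recf recf | Mn recf

definition arg :: "nat \<Rightarrow> nat list \<Rightarrow> nat" where
  "arg i xs = (if i < length xs then xs ! i else 0)"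

inductive eval :: "recf \<Rightarrow> nat list \<Rightarrow> nat \<Rightarrow> bool" where
  ev_Z: "eval Zr xs 0"
| ev_S: "eval Sc xs (Suc (arg 0 xs))"
| ev_P: "eval (Proj i) xs (arg i xs)"
| ev_C: "list_all2 (\<lambda>g y. eval g xs y) gs ys \<Longrightarrow> eval f ys z \<Longrightarrow> eval (Comp f gs) xs z"
| ev_R0: "eval f xs y \<Longrightarrow> eval (Prec f g) (0 # xs) y"
| ev_RS: "eval (Prec f g) (n # xs) r \<Longrightarrow> eval g (r # n # xs) y \<Longrightarrow> eval (Prec f g) (Suc n # xs) y"
| ev_M: "eval f (n # xs) 0 \<Longrightarrow> (\<forall>m<n. \<exists>y. y \<noteq> 0 \<and> eval f (m # xs) y) \<Longrightarrow> eval (Mn f) xs n"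

definition total_rec2 :: "(nat \<Rightarrow> nat \<Rightarrow> nat) \<Rightarrow> bool" where
  "total_rec2 h \<longleftrightarrow> (\<exists>c. \<forall>x y. eval c [x, y] (h x y))"

type_synonym baire = "nat \<Rightarrow> nat"

definition pref :: "baire \<Rightarrow> nat \<Rightarrow> nat" where
  "pref p m = list_encode (map p [0..<m])"

text \<open>F :\<subseteq> N^N \<rightarrow> N^N is computable iff it has a total recursive associate h:
  on input (code of p|m, n), h returns 0 (no answer yet) or (F(p)(n) + 1), and for every
  p in dom F and every n some prefix yields an answer. (Equivalent to Type-2 machine
  computability; nothing is required outside dom F.)\<close>
definition computable :: "(baire \<Rightarrow> baire option) \<Rightarrow> bool" where
  "computable F \<longleftrightarrow> (\<exists>h. total_rec2 h \<and>
     (\<forall>p q. F p = Some q \<longrightarrow>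
        (\<forall>n. (\<exists>m. h (pref p m) n \<noteq> 0) \<and> (\<forall>m. h (pref p m) n \<noteq> 0 \<longrightarrow> h (pref p m) n = Suc (q n)))))"

definition bpair :: "baire \<Rightarrow> baire \<Rightarrow> baire" where
  "bpair p q n = (if even n then p (n div 2) else q (n div 2))"

text \<open>A represented space is given by its partial surjection delta; the space is ran delta.\<close>
type_synonym 'x rep = "baire \<Rightarrow> 'x option"

text \<open>A problem f :\<subseteq> X \<rightrightarrows> Y is encoded as f :: 'x \<Rightarrow> 'y set with
  dom f = {x. f x \<noteq> {}}.\<close>
definition pdom :: "('x \<Rightarrow> 'y set) \<Rightarrow> 'x set" where
  "pdom f = {x. f x \<noteq> {}}"

definition problem :: "'x rep \<Rightarrow> 'y rep \<Rightarrow> ('x \<Rightarrow> 'y set) \<Rightarrow> bool" where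
  "problem dX dY f \<longleftrightarrow> (\<forall>x\<in>pdom f. x \<in> ran dX \<and> f x \<subseteq> ran dY)"

definition realizes :: "'x rep \<Rightarrow> 'y rep \<Rightarrow> (baire \<Rightarrow> baire option) \<Rightarrow> ('x \<Rightarrow> 'y set) \<Rightarrow> bool" where
  "realizes dX dY F f \<longleftrightarrow>
     (\<forall>p x. dX p = Some x \<and> x \<in> pdom f \<longrightarrow> (\<exists>q y. F p = Some q \<and> dY q = Some y \<and> y \<in> f x))"

definition W_red :: "'x rep \<Rightarrow> 'y rep \<Rightarrow> ('x \<Rightarrow> 'y set) \<Rightarrow> 'u rep \<Rightarrow> 'v rep \<Rightarrow> ('u \<Rightarrow> 'v set) \<Rightarrow> bool" where
  "W_red dX dY f dU dV g \<longleftrightarrow>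
     (\<exists>H K. computable H \<and> computable K \<and>
        (\<forall>G. realizes dU dV G g \<longrightarrow>
           realizes dX dY (\<lambda>p. case K p of None \<Rightarrow> None | Some k \<Rightarrow>
                (case G k of None \<Rightarrow> None | Some r \<Rightarrow> H (bpair p r))) f))"

definition rep_nat :: "nat rep" where
  "rep_nat p = Some (p 0)"

text \<open>Sierpinski space: False stands for 0, True for 1.\<close>
definition rep_S :: "bool rep" where
  "rep_S p = Some (p \<noteq> (\<lambda>_. 0))"

text \<open>Countable tupling: <p_0,p_1,...>(prod_encode(i,j)) = p_i(j).\<close>
definition lim_baire :: "baire \<Rightarrow> baire option" where
  "lim_baire p = (if \<forall>j. \<exists>a. \<forall>\<^sub>F n in sequentially. p (prod_encode (n, j)) = a
     then Some (\<lambda>j. THE a. \<forall>\<^sub>F n in sequentially. p (prod_encode (n, j)) = a) else None)"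

definition jump_rep :: "'x rep \<Rightarrow> 'x rep" where
  "jump_rep dX p = (case lim_baire p of None \<Rightarrow> None | Some q \<Rightarrow> dX q)"

definition nzset :: "baire \<Rightarrow> nat set" where
  "nzset p = {i. p i \<noteq> 0}"

definition minus1 :: "baire \<Rightarrow> baire" where
  "minus1 p n = p (enumerate (nzset p) n) - 1"

text \<open>Completion: None plays the role of \<bottom>.\<close>
definition completion :: "'x rep \<Rightarrow> 'x option rep" where
  "completion dX p = Some (if infinite (nzset p) \<and> dX (minus1 p) \<noteq> None
      then dX (minus1 p) else None)"

definition carrier_bar :: "'x rep \<Rightarrow> 'x option set" where
  "carrier_bar dX = insert None (Some ` ran dX)"

definition cbar :: "'v rep \<Rightarrow> ('u \<Rightarrow> 'v set) \<Rightarrow> ('u option \<Rightarrow> 'v option set)" where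
  "cbar dV g y = (case y of Some u \<Rightarrow> (if u \<in> pdom g then Some ` g u else carrier_bar dV)
                           | None \<Rightarrow> carrier_bar dV)"

definition Ttot :: "'v rep \<Rightarrow> ('u \<Rightarrow> 'v set) \<Rightarrow> ('u \<Rightarrow> 'v set)" where
  "Ttot dV g u = (if u \<in> pdom g then g u else ran dV)"

definition co_complete :: "'u itself \<Rightarrow> 'v itself \<Rightarrow> 'x rep \<Rightarrow> 'y rep \<Rightarrow> ('x \<Rightarrow> 'y set) \<Rightarrow> bool" where
  "co_complete _ _ dX dY h \<longleftrightarrow>
     (\<forall>(dU::'u rep) (dV::'v rep) g. problem dU dV g \<longrightarrow>
        (W_red dX dY h (completion dU) (completion dV) (cbar dV g) \<longleftrightarrow> W_red dX dY h dU dV g))"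

definition co_total :: "'u itself \<Rightarrow> 'v itself \<Rightarrow> 'x rep \<Rightarrow> 'y rep \<Rightarrow> ('x \<Rightarrow> 'y set) \<Rightarrow> bool" where
  "co_total _ _ dX dY h \<longleftrightarrow>
     (\<forall>(dU::'u rep) (dV::'v rep) g. problem dU dV g \<longrightarrow>
        (W_red dX dY h dU dV (Ttot dV g) \<longleftrightarrow> W_red dX dY h dU dV g))"

definition sv :: "('x \<Rightarrow> 'y option) \<Rightarrow> ('x \<Rightarrow> 'y set)" where
  "sv f x = set_option (f x)"

end

theory Submission
  imports Defs
begin

text \<open>Suppose \<open>f'\<close> reduces to the completion (or the totalization) of \<open>g\<close> via \<open>H\<close> and \<open>K\<close>.
  An instance \<open>K p\<close> which does not name a point of \<open>dom g\<close> is bad: a realizer may answer it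
  arbitrarily. Continuity of \<open>H\<close> shows that near a name of \<open>a\<close>, every point sent to a bad instance
  receives an answer agreeing with one for \<open>a\<close> at any chosen position. For \<open>f\<close> with values in
  \<open>\<nat>\<close> this forces the value \<open>f a\<close>, so continuing such a prefix with a name of some \<open>b\<close> with
  \<open>f b \<noteq> f a\<close> gives a cylinder on which \<open>K\<close> produces no bad instance. For \<open>f\<^sub>S\<close> the answer \<open>1\<close>
  is witnessed at a finite position, which rules out bad instances at points with value \<open>1\<close>, and
  near a name of such a point also at points with value \<open>0\<close>. Since a name for the jump may begin
  with any finite prefix, prepending that cylinder to every input turns the reduction into one
  to \<open>g\<close>.\<close>

section \<open>Recursive functions on argument lists\<close>

definition recfn :: "nat \<Rightarrow> (nat list \<Rightarrow> nat) \<Rightarrow> bool" where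
  "recfn n F \<longleftrightarrow> (\<exists>c. \<forall>xs. length xs = n \<longrightarrow> eval c xs (F xs))"

fun prec_fun :: "(nat list \<Rightarrow> nat) \<Rightarrow> (nat list \<Rightarrow> nat) \<Rightarrow> nat \<Rightarrow> nat list \<Rightarrow> nat" where
  "prec_fun F G 0 ys = F ys"
| "prec_fun F G (Suc k) ys = G (prec_fun F G k ys # k # ys)"

lemma recfn_cong: "recfn n F \<Longrightarrow> (\<And>xs. length xs = n \<Longrightarrow> F xs = G xs) \<Longrightarrow> recfn n G"
  unfolding recfn_def by metis

lemma recfn_zero: "recfn n (\<lambda>_. 0)"
  unfolding recfn_def using ev_Z by blast

lemma recfn_proj: "i < n \<Longrightarrow> recfn n (\<lambda>xs. xs ! i)"
  unfolding recfn_def using ev_P by (metis arg_def)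

lemma recfn_codes_exist:
  assumes "\<forall>g\<in>set gs. \<exists>c. \<forall>xs. length xs = n \<longrightarrow> eval c xs (g xs)"
  shows "\<exists>cs. list_all2 (\<lambda>c g. \<forall>xs. length xs = n \<longrightarrow> eval c xs (g xs)) cs gs"
  using assms
proof (induction gs)
  case Nil then show ?case by auto
next
  case (Cons g gs)
  then obtain cs where "list_all2 (\<lambda>c g. \<forall>xs. length xs = n \<longrightarrow> eval c xs (g xs)) cs gs" by auto
  moreover obtain c where "\<forall>xs. length xs = n \<longrightarrow> eval c xs (g xs)" using Cons.prems by auto
  ultimately show ?case by (intro exI[of _ "c # cs"]) auto
qed

lemma recfn_comp:
  assumes "recfn m F" "length gs = m" "\<forall>g\<in>set gs. recfn n g"
  shows "recfn n (\<lambda>xs. F (map (\<lambda>g. g xs) gs))"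
proof -
  obtain cF where cF: "\<forall>xs. length xs = m \<longrightarrow> eval cF xs (F xs)" using assms(1) recfn_def by auto
  obtain cs where cs: "list_all2 (\<lambda>c g. \<forall>xs. length xs = n \<longrightarrow> eval c xs (g xs)) cs gs"
    using recfn_codes_exist assms(3) unfolding recfn_def by blast
  have "eval (Comp cF cs) xs (F (map (\<lambda>g. g xs) gs))" if "length xs = n" for xs
  proof (rule ev_C)
    show "list_all2 (\<lambda>g y. eval g xs y) cs (map (\<lambda>g. g xs) gs)"
      using cs that by (auto simp: list_all2_conv_all_nth)
    show "eval cF (map (\<lambda>g. g xs) gs) (F (map (\<lambda>g. g xs) gs))" using cF assms(2) by auto
  qed
  then show ?thesis unfolding recfn_def by blast
qed

lemma recfn_prec_hd_tl:
  assumes "recfn n F" "recfn (Suc (Suc n)) G"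
  shows "recfn (Suc n) (\<lambda>xs. prec_fun F G (hd xs) (tl xs))"
proof -
  obtain cF where cF: "\<forall>xs. length xs = n \<longrightarrow> eval cF xs (F xs)" using assms(1) recfn_def by auto
  obtain cG where cG: "\<forall>xs. length xs = Suc (Suc n) \<longrightarrow> eval cG xs (G xs)" using assms(2) recfn_def by auto
  have "\<forall>ys. length ys = n \<longrightarrow> eval (Prec cF cG) (k # ys) (prec_fun F G k ys)" for k
  proof (induction k)
    case 0 then show ?case using cF by (auto intro: ev_R0)
  next
    case (Suc k) then show ?case using cG by (auto intro: ev_RS)
  qed
  then show ?thesis unfolding recfn_def
    by (metis length_Suc_conv list.sel(1,3))
qed

lemma list_length_1: "length xs = Suc 0 \<Longrightarrow> xs = [xs!0]"
  by (cases xs) auto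

lemma list_length_2: "length xs = 2 \<Longrightarrow> xs = [xs!0, xs!1]"
  by (cases xs; cases "tl xs") auto

lemma recfn_Suc1: "recfn 1 (\<lambda>xs. Suc (xs!0))"
  unfolding recfn_def using ev_S by (metis arg_def less_numeral_extra(1) One_nat_def zero_less_one)

lemma recfn_comp1: "recfn 1 F \<Longrightarrow> recfn n g \<Longrightarrow> recfn n (\<lambda>xs. F [g xs])"
  using recfn_comp[of 1 F "[g]" n] by simp

lemma recfn_comp2: "recfn 2 F \<Longrightarrow> recfn n g \<Longrightarrow> recfn n h \<Longrightarrow> recfn n (\<lambda>xs. F [g xs, h xs])"
  using recfn_comp[of 2 F "[g,h]" n] by simp

lemma recfn_Suc: "recfn n g \<Longrightarrow> recfn n (\<lambda>xs. Suc (g xs))"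
  using recfn_comp1[OF recfn_Suc1] by simp

lemma recfn_const: "recfn n (\<lambda>_. k)"
  by (induction k) (auto intro: recfn_zero recfn_Suc[of n "\<lambda>_. _", simplified])

lemma recfn_prec:
  assumes "recfn n F" "recfn (Suc (Suc n)) G" "Suc n = m" "\<And>xs. length xs = m \<Longrightarrow> prec_fun F G (hd xs) (tl xs) = H xs"
  shows "recfn m H"
  using recfn_cong[OF recfn_prec_hd_tl[OF assms(1,2)]] assms(3,4) by metis

lemma map_nth_length: "length xs = n \<Longrightarrow> map ((!) xs) [0..<n] = xs"
  using map_nth by blast

lemma upt_2_shift: "[2..<n+2] = map (\<lambda>i. i + 2) [0..<n]"
  using map_add_upt[of 2 n] by simp

lemma upt_Suc_Suc_shift: "[Suc (Suc 0)..<Suc (Suc n)] = map (\<lambda>i. Suc (Suc i)) [0..<n]"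
  by (induction n) auto

lemma recfn_select:
  assumes "recfn m F" "length is = m" "\<forall>i\<in>set is. i < n"
  shows "recfn n (\<lambda>xs. F (map ((!) xs) is))"
proof -
  have "recfn n (\<lambda>xs. F (map (\<lambda>g. g xs) (map (\<lambda>i xs. xs ! i) is)))"
    by (rule recfn_comp[OF assms(1)]) (use assms recfn_proj in auto)
  then show ?thesis by (simp add: comp_def)
qed

lemma recfn_cons:
  assumes "recfn (Suc n) F" "recfn n t"
  shows "recfn n (\<lambda>xs. F (t xs # xs))"
proof -
  have "recfn n (\<lambda>xs. F (map (\<lambda>g. g xs) (t # map (\<lambda>i xs. xs ! i) [0..<n])))"
    by (rule recfn_comp[OF assms(1)]) (use assms recfn_proj in auto)
  then show ?thesis by (rule recfn_cong) (simp add: comp_def map_nth_length)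
qed

lemma recfn_cons_select:
  assumes "recfn (Suc n) F" "recfn m t" "length is = n" "\<forall>i\<in>set is. i < m"
  shows "recfn m (\<lambda>zs. F (t zs # map ((!) zs) is))"
proof -
  have "recfn m (\<lambda>zs. F (map (\<lambda>g. g zs) (t # map (\<lambda>i zs. zs ! i) is)))"
    by (rule recfn_comp[OF assms(1)]) (use assms recfn_proj in auto)
  then show ?thesis by (simp add: comp_def)
qed

lemma recfn_cons2:
  assumes "recfn (Suc (Suc n)) F" "recfn n a" "recfn n b"
  shows "recfn n (\<lambda>xs. F (a xs # b xs # xs))"
proof -
  have "recfn n (\<lambda>xs. F (map (\<lambda>g. g xs) (a # b # map (\<lambda>i xs. xs ! i) [0..<n])))"
    by (rule recfn_comp[OF assms(1)]) (use assms recfn_proj in auto)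
  then show ?thesis by (rule recfn_cong) (simp add: comp_def map_nth_length)
qed

lemma recfn_tl: assumes "recfn n g" shows "recfn (Suc n) (\<lambda>zs. g (tl zs))"
proof -
  have 1: "recfn (Suc n) (\<lambda>zs. g (map ((!) zs) (map Suc [0..<n])))"
    by (rule recfn_select[OF assms]) auto
  have 2: "map ((!) zs) (map Suc [0..<n]) = tl zs" if "length zs = Suc n" for zs :: "nat list"
    using that by (intro nth_equalityI) (auto simp: nth_tl)
  show ?thesis by (rule recfn_cong[OF 1]) (simp only: 2)
qed

lemma recfn_skip_second:
  assumes "recfn (Suc n) F" shows "recfn (Suc (Suc n)) (\<lambda>zs. F (zs!0 # tl (tl zs)))"
proof -
  have 1: "recfn (Suc (Suc n)) (\<lambda>zs. F ((\<lambda>zs. zs!0) zs # map ((!) zs) (map (\<lambda>i. i + 2) [0..<n])))"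
    by (rule recfn_cons_select[OF assms recfn_proj]) auto
  have 2: "map ((!) zs) (map (\<lambda>i. i + 2) [0..<n]) = tl (tl zs)" if "length zs = Suc (Suc n)" for zs :: "nat list"
    using that by (intro nth_equalityI) (auto simp: nth_tl)
  show ?thesis by (rule recfn_cong[OF 1]) (simp only: 2)
qed

lemma recfn_add2: "recfn 2 (\<lambda>xs. xs!0 + xs!1)"
proof (rule recfn_prec[of 1 "\<lambda>ys. ys!0" "\<lambda>zs. Suc (zs!0)"])
  show "recfn 1 (\<lambda>ys. ys!0)" by (rule recfn_proj) simp
  show "Suc 1 = 2" by simp
  show "recfn (Suc (Suc 1)) (\<lambda>zs. Suc (zs!0))" by (rule recfn_Suc, rule recfn_proj) simp
  fix xs :: "nat list" assume "length xs = 2"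
  then obtain a b where xs: "xs = [a,b]" using list_length_2 by blast
  have "prec_fun (\<lambda>ys. ys!0) (\<lambda>zs. Suc (zs!0)) a [b] = a + b" by (induction a) auto
  then show "prec_fun (\<lambda>ys. ys!0) (\<lambda>zs. Suc (zs!0)) (hd xs) (tl xs) = xs!0 + xs!1" by (simp add: xs)
qed

lemma recfn_add: "recfn n g \<Longrightarrow> recfn n h \<Longrightarrow> recfn n (\<lambda>xs. g xs + h xs)"
  using recfn_comp2[OF recfn_add2] by simp

lemma recfn_mult2: "recfn 2 (\<lambda>xs. xs!0 * xs!1)"
proof (rule recfn_prec[of 1 "\<lambda>ys. 0" "\<lambda>zs. zs!0 + zs!2"])
  show "recfn 1 (\<lambda>ys. 0)" by (rule recfn_zero)
  show "Suc 1 = 2" by simp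
  show "recfn (Suc (Suc 1)) (\<lambda>zs. zs!0 + zs!2)" by (intro recfn_add recfn_proj) auto
  fix xs :: "nat list" assume "length xs = 2"
  then obtain a b where xs: "xs = [a,b]" using list_length_2 by blast
  have "prec_fun (\<lambda>ys. 0) (\<lambda>zs. zs!0 + zs!2) a [b] = a * b" by (induction a) auto
  then show "prec_fun (\<lambda>ys. 0) (\<lambda>zs. zs!0 + zs!2) (hd xs) (tl xs) = xs!0 * xs!1" by (simp add: xs)
qed

lemma recfn_mult: "recfn n g \<Longrightarrow> recfn n h \<Longrightarrow> recfn n (\<lambda>xs. g xs * h xs)"
  using recfn_comp2[OF recfn_mult2] by simp

lemma recfn_pred1: "recfn 1 (\<lambda>xs. xs!0 - 1)"
proof (rule recfn_prec[of 0 "\<lambda>ys. 0" "\<lambda>zs. zs!1"])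
  show "recfn 0 (\<lambda>ys. 0)" by (rule recfn_zero)
  show "Suc 0 = 1" by simp
  show "recfn (Suc (Suc 0)) (\<lambda>zs. zs!1)" by (rule recfn_proj) simp
  fix xs :: "nat list" assume "length xs = 1"
  then obtain a where xs: "xs = [a]" using list_length_1[of xs] by auto
  show "prec_fun (\<lambda>ys. 0) (\<lambda>zs. zs!1) (hd xs) (tl xs) = xs!0 - 1" by (cases a) (auto simp: xs)
qed

lemma recfn_pred: "recfn n g \<Longrightarrow> recfn n (\<lambda>xs. g xs - 1)"
  using recfn_comp1[OF recfn_pred1] by simp

lemma recfn_diff2: "recfn 2 (\<lambda>xs. xs!1 - xs!0)"
proof (rule recfn_prec[of 1 "\<lambda>ys. ys!0" "\<lambda>zs. zs!0 - 1"])
  show "recfn 1 (\<lambda>ys. ys!0)" by (rule recfn_proj) simp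
  show "Suc 1 = 2" by simp
  show "recfn (Suc (Suc 1)) (\<lambda>zs. zs!0 - 1)" by (intro recfn_pred recfn_proj) auto
  fix xs :: "nat list" assume "length xs = 2"
  then obtain a b where xs: "xs = [a,b]" using list_length_2 by blast
  have "prec_fun (\<lambda>ys. ys!0) (\<lambda>zs. zs!0 - 1) a [b] = b - a" by (induction a) auto
  then show "prec_fun (\<lambda>ys. ys!0) (\<lambda>zs. zs!0 - 1) (hd xs) (tl xs) = xs!1 - xs!0" by (simp add: xs)
qed

lemma recfn_diff: "recfn n g \<Longrightarrow> recfn n h \<Longrightarrow> recfn n (\<lambda>xs. g xs - h xs)"
  using recfn_comp2[OF recfn_diff2, of n h g] by simp

lemma recfn_mod2_1: "recfn 1 (\<lambda>xs. xs!0 mod 2)"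
proof (rule recfn_prec[of 0 "\<lambda>ys. 0" "\<lambda>zs. 1 - zs!0"])
  show "recfn 0 (\<lambda>ys. 0)" by (rule recfn_zero)
  show "recfn (Suc (Suc 0)) (\<lambda>zs. 1 - zs!0)" by (intro recfn_diff recfn_const recfn_proj) simp
  show "Suc 0 = 1" by simp
  fix xs :: "nat list" assume "length xs = 1"
  then obtain a where xs: "xs = [a]" using list_length_1[of xs] by auto
  have "prec_fun (\<lambda>ys. 0) (\<lambda>zs. 1 - zs!0) a [] = a mod 2" by (induction a) (auto simp: mod_Suc)
  then show "prec_fun (\<lambda>ys. 0) (\<lambda>zs. 1 - zs!0) (hd xs) (tl xs) = xs!0 mod 2" by (simp add: xs)
qed

lemma recfn_mod2: "recfn n g \<Longrightarrow> recfn n (\<lambda>xs. g xs mod 2)"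
  using recfn_comp1[OF recfn_mod2_1] by simp

lemma recfn_div2_1: "recfn 1 (\<lambda>xs. xs!0 div 2)"
proof (rule recfn_prec[of 0 "\<lambda>ys. 0" "\<lambda>zs. zs!0 + zs!1 mod 2"])
  show "recfn 0 (\<lambda>ys. 0)" by (rule recfn_zero)
  show "recfn (Suc (Suc 0)) (\<lambda>zs. zs!0 + zs!1 mod 2)" by (intro recfn_add recfn_mod2 recfn_proj) simp_all
  show "Suc 0 = 1" by simp
  fix xs :: "nat list" assume "length xs = 1"
  then obtain a where xs: "xs = [a]" using list_length_1[of xs] by auto
  have "prec_fun (\<lambda>ys. 0) (\<lambda>zs. zs!0 + zs!1 mod 2) a [] = a div 2" by (induction a) (simp_all, presburger)
  then show "prec_fun (\<lambda>ys. 0) (\<lambda>zs. zs!0 + zs!1 mod 2) (hd xs) (tl xs) = xs!0 div 2" by (simp add: xs)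
qed

lemma recfn_div2: "recfn n g \<Longrightarrow> recfn n (\<lambda>xs. g xs div 2)"
  using recfn_comp1[OF recfn_div2_1] by simp

definition recpred :: "nat \<Rightarrow> (nat list \<Rightarrow> bool) \<Rightarrow> bool" where
  "recpred n P \<longleftrightarrow> recfn n (\<lambda>xs. if P xs then 1 else 0)"

lemma recfn_If:
  assumes "recpred n P" "recfn n a" "recfn n b"
  shows "recfn n (\<lambda>xs. if P xs then a xs else b xs)"
proof -
  have "recfn n (\<lambda>xs. (if P xs then 1 else 0) * a xs + (1 - (if P xs then 1 else 0)) * b xs)"
    using assms unfolding recpred_def by (intro recfn_add recfn_mult recfn_diff recfn_const) auto
  then show ?thesis by (rule recfn_cong) auto
qed

lemma recpred_le: "recfn n g \<Longrightarrow> recfn n h \<Longrightarrow> recpred n (\<lambda>xs. g xs \<le> h xs)"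
  unfolding recpred_def
  by (rule recfn_cong[of n "\<lambda>xs. 1 - (g xs - h xs)"]) (auto intro: recfn_diff recfn_const)

lemma recpred_not: "recpred n P \<Longrightarrow> recpred n (\<lambda>xs. \<not> P xs)"
  unfolding recpred_def
  by (rule recfn_cong[of n "\<lambda>xs. 1 - (if P xs then 1 else 0)"]) (auto intro: recfn_diff recfn_const)

lemma recpred_conj: "recpred n P \<Longrightarrow> recpred n Q \<Longrightarrow> recpred n (\<lambda>xs. P xs \<and> Q xs)"
  unfolding recpred_def
  by (rule recfn_cong[of n "\<lambda>xs. (if P xs then 1 else 0) * (if Q xs then 1 else 0)"]) (auto intro: recfn_mult)

lemma recpred_less: "recfn n g \<Longrightarrow> recfn n h \<Longrightarrow> recpred n (\<lambda>xs. g xs < h xs)"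
  using recpred_not[OF recpred_le[of n h g]] by (simp add: not_le)

lemma recpred_eq: "recfn n g \<Longrightarrow> recfn n h \<Longrightarrow> recpred n (\<lambda>xs. g xs = h xs)"
  using recpred_conj[OF recpred_le[of n g h] recpred_le[of n h g]] by (simp add: order_eq_iff)

lemma recpred_even: "recfn n g \<Longrightarrow> recpred n (\<lambda>xs. even (g xs))"
  using recpred_eq[OF recfn_mod2[of n g] recfn_const[of n 0]] by (simp add: even_iff_mod_2_eq_zero)

lemma recfn_min: "recfn n g \<Longrightarrow> recfn n h \<Longrightarrow> recfn n (\<lambda>xs. min (g xs) (h xs))"
  unfolding min_def by (intro recfn_If recpred_le) auto

lemma recfn_sum_hd_tl:
  assumes "recfn (Suc n) F"
  shows "recfn (Suc n) (\<lambda>xs. \<Sum>t<hd xs. F (t # tl xs))"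
proof (rule recfn_prec[of n "\<lambda>ys. 0" "\<lambda>zs. zs!0 + F (map ((!) zs) [1..<n+2])", OF _ _ refl])
  show "recfn n (\<lambda>ys. 0)" by (rule recfn_zero)
  show "recfn (Suc (Suc n)) (\<lambda>zs. zs!0 + F (map ((!) zs) [1..<n+2]))"
    by (intro recfn_add recfn_proj recfn_select[OF assms]) auto
  fix xs :: "nat list" assume "length xs = Suc n"
  then obtain a ys where xs: "xs = a # ys" "length ys = n" by (cases xs) auto
  have "prec_fun (\<lambda>ys. 0) (\<lambda>zs. zs!0 + F (map ((!) zs) [1..<n+2])) k ys = (\<Sum>t<k. F (t # ys))" for k
  proof (induction k)
    case (Suc k)
    have "map ((!) (v # k # ys)) [1..<n+2] = k # ys" for v
    proof -
      have "[1..<n+2] = 1 # map (\<lambda>i. i + 2) [0..<n]"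
        using upt_Suc_Suc_shift by (simp add: upt_conv_Cons del: upt_Suc)
      then show ?thesis using xs(2) by (simp add: comp_def map_nth_length)
    qed
    then show ?case using Suc by simp
  qed simp
  then show "prec_fun (\<lambda>ys. 0) (\<lambda>zs. zs!0 + F (map ((!) zs) [1..<n+2])) (hd xs) (tl xs) = (\<Sum>t<hd xs. F (t # tl xs))"
    by (simp add: xs)
qed

lemma recfn_sum:
  assumes "recfn (Suc n) F" "recfn n b"
  shows "recfn n (\<lambda>xs. \<Sum>t<b xs. F (t # xs))"
  using recfn_cons[OF recfn_sum_hd_tl[OF assms(1)] assms(2)] by simp

lemma recfn_funpow_hd_tl:
  assumes "recfn (Suc n) F" "recfn n c0"
  shows "recfn (Suc n) (\<lambda>xs. ((\<lambda>y. F (y # tl xs)) ^^ hd xs) (c0 (tl xs)))"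
proof (rule recfn_prec[of n c0 "\<lambda>zs. F (map ((!) zs) (0 # [2..<n+2]))", OF _ _ refl])
  show "recfn n c0" by fact
  show "recfn (Suc (Suc n)) (\<lambda>zs. F (map ((!) zs) (0 # [2..<n+2])))"
    by (intro recfn_select[OF assms(1)]) auto
  fix xs :: "nat list" assume "length xs = Suc n"
  then obtain a ys where xs: "xs = a # ys" "length ys = n" by (cases xs) auto
  have "prec_fun c0 (\<lambda>zs. F (map ((!) zs) (0 # [2..<n+2]))) k ys = ((\<lambda>y. F (y # ys)) ^^ k) (c0 ys)" for k
  proof (induction k)
    case (Suc k)
    have "map ((!) (v # k # ys)) [2..<n+2] = ys" for v
    proof -
      have "[2..<n+2] = map (\<lambda>i. i + 2) [0..<n]"
        by (rule upt_2_shift)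
      then show ?thesis using xs(2) by (simp add: comp_def map_nth_length)
    qed
    then show ?case using Suc by simp
  qed simp
  then show "prec_fun c0 (\<lambda>zs. F (map ((!) zs) (0 # [2..<n+2]))) (hd xs) (tl xs) = ((\<lambda>y. F (y # tl xs)) ^^ hd xs) (c0 (tl xs))"
    by (simp add: xs)
qed

lemma recfn_funpow:
  assumes "recfn (Suc n) F" "recfn n c0" "recfn n k"
  shows "recfn n (\<lambda>xs. ((\<lambda>y. F (y # xs)) ^^ k xs) (c0 xs))"
  using recfn_cons[OF recfn_funpow_hd_tl[OF assms(1,2)] assms(3)] by simp

section \<open>Coding of pairs and lists\<close>

lemma recfn_triangle1: "recfn 1 (\<lambda>xs. triangle (xs!0))"
proof (rule recfn_prec[of 0 "\<lambda>ys. 0" "\<lambda>zs. zs!0 + Suc (zs!1)"])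
  show "recfn 0 (\<lambda>ys. 0)" by (rule recfn_zero)
  show "recfn (Suc (Suc 0)) (\<lambda>zs. zs!0 + Suc (zs!1))" by (intro recfn_add recfn_Suc recfn_proj) auto
  show "Suc 0 = 1" by simp
  fix xs :: "nat list" assume "length xs = 1"
  then obtain a where xs: "xs = [a]" using list_length_1[of xs] by auto
  have "prec_fun (\<lambda>ys. 0) (\<lambda>zs. zs!0 + Suc (zs!1)) a [] = triangle a" by (induction a) auto
  then show "prec_fun (\<lambda>ys. 0) (\<lambda>zs. zs!0 + Suc (zs!1)) (hd xs) (tl xs) = triangle (xs!0)" by (simp add: xs)
qed

lemma recfn_triangle: "recfn n g \<Longrightarrow> recfn n (\<lambda>xs. triangle (g xs))"
  using recfn_comp1[OF recfn_triangle1] by simp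

lemma recfn_prod_encode: "recfn n g \<Longrightarrow> recfn n h \<Longrightarrow> recfn n (\<lambda>xs. prod_encode (g xs, h xs))"
  unfolding prod_encode_def by (simp add: recfn_add recfn_triangle)

lemma triangle_mono: "m \<le> n \<Longrightarrow> triangle m \<le> triangle n"
  by (induction n) (auto simp: le_Suc_eq)

lemma le_triangle: "k \<le> triangle k"
  by (induction k) auto

lemma triangle_bracket: "\<exists>k. triangle k \<le> z \<and> z < triangle (Suc k)"
proof (induction z)
  case 0 then show ?case by (intro exI[of _ 0]) auto
next
  case (Suc z)
  then obtain k where k: "triangle k \<le> z" "z < triangle (Suc k)" by blast
  show ?case
  proof (cases "Suc z < triangle (Suc k)")
    case True then show ?thesis using k by (intro exI[of _ k]) auto
  next
    case False then show ?thesis using k by (intro exI[of _ "Suc k"]) auto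
  qed
qed

definition triangle_root :: "nat \<Rightarrow> nat" where
  "triangle_root z = (\<Sum>t<z. if triangle (Suc t) \<le> z then 1 else 0)"

lemma sum_indicator_less: "(\<Sum>t<z. if t < k then 1 else (0::nat)) = min z k"
  by (induction z) auto

lemma triangle_root_eq: assumes "triangle k \<le> z" "z < triangle (Suc k)" shows "triangle_root z = k"
proof -
  have "(if triangle (Suc t) \<le> z then 1 else (0::nat)) = (if t < k then 1 else 0)" for t
  proof -
    have "triangle (Suc t) \<le> z \<longleftrightarrow> t < k"
    proof
      assume "triangle (Suc t) \<le> z"
      then show "t < k" using assms triangle_mono[of "Suc k" "Suc t"] by (metis not_less not_less_eq_eq order.strict_trans2)
    next
      assume "t < k" then show "triangle (Suc t) \<le> z" using assms triangle_mono[of "Suc t" k] by auto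
    qed
    then show ?thesis by simp
  qed
  then have "triangle_root z = min z k" unfolding triangle_root_def using sum_indicator_less by simp
  moreover have "k \<le> z" using le_triangle[of k] assms by linarith
  ultimately show ?thesis by simp
qed

lemma prod_decode_triangle_root: "prod_decode z = (z - triangle (triangle_root z), triangle_root z - (z - triangle (triangle_root z)))"
proof -
  obtain k where k: "triangle k \<le> z" "z < triangle (Suc k)" using triangle_bracket by blast
  then have d: "triangle_root z = k" by (rule triangle_root_eq)
  have z: "z = triangle k + (z - triangle k)" using k by simp
  have "z - triangle k \<le> k" using k by simp
  then have "prod_decode (triangle k + (z - triangle k)) = (z - triangle k, k - (z - triangle k))"
    by (simp add: prod_decode_triangle_add prod_decode_aux.simps)
  then show ?thesis using z d by metis
qed

lemma recfn_triangle_root: "recfn n g \<Longrightarrow> recfn n (\<lambda>xs. triangle_root (g xs))"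
proof -
  assume g: "recfn n g"
  have "recfn n (\<lambda>xs. \<Sum>t<g xs. (\<lambda>zs. if triangle (Suc (zs!0)) \<le> g (tl zs) then 1 else 0) (t # xs))"
  proof (rule recfn_sum[OF _ g])
    have g': "recfn (Suc n) (\<lambda>zs. g (tl zs))" using g by (rule recfn_tl)
    show "recfn (Suc n) (\<lambda>zs. if triangle (Suc (zs!0)) \<le> g (tl zs) then 1 else 0)"
      by (intro recfn_If recpred_le recfn_triangle recfn_Suc recfn_proj g' recfn_const) auto
  qed
  then show ?thesis unfolding triangle_root_def by simp
qed

lemma recfn_fst_prod_decode: "recfn n g \<Longrightarrow> recfn n (\<lambda>xs. fst (prod_decode (g xs)))"
  unfolding prod_decode_triangle_root by (simp add: recfn_diff recfn_triangle recfn_triangle_root)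

lemma recfn_snd_prod_decode: "recfn n g \<Longrightarrow> recfn n (\<lambda>xs. snd (prod_decode (g xs)))"
  unfolding prod_decode_triangle_root by (simp add: recfn_diff recfn_triangle recfn_triangle_root)

definition code_hd :: "nat \<Rightarrow> nat" where "code_hd c = fst (prod_decode (c - 1))"

definition code_tl :: "nat \<Rightarrow> nat" where "code_tl c = snd (prod_decode (c - 1))"

definition code_nth :: "nat \<Rightarrow> nat \<Rightarrow> nat" where "code_nth c i = code_hd ((code_tl ^^ i) c)"

definition code_length :: "nat \<Rightarrow> nat" where "code_length c = (\<Sum>t<c. if (code_tl ^^ t) c = 0 then 0 else 1)"

lemma prod_decode_0: "prod_decode 0 = (0, 0)"
  using prod_encode_inverse[of "(0,0)"] by (simp add: prod_encode_def)

lemma code_tl_list_encode: "code_tl (list_encode xs) = list_encode (tl xs)"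
  by (cases xs) (auto simp: code_tl_def prod_decode_0)

lemma code_hd_list_encode: "xs \<noteq> [] \<Longrightarrow> code_hd (list_encode xs) = hd xs"
  by (cases xs) (auto simp: code_hd_def)

lemma code_tl_funpow_list_encode: "(code_tl ^^ i) (list_encode xs) = list_encode (drop i xs)"
  by (induction i) (auto simp: code_tl_list_encode drop_Suc tl_drop)

lemma code_nth_list_encode: "i < length xs \<Longrightarrow> code_nth (list_encode xs) i = xs ! i"
  by (simp add: code_nth_def code_tl_funpow_list_encode code_hd_list_encode hd_drop_conv_nth)

lemma length_le_list_encode: "length xs \<le> list_encode xs"
proof (induction xs)
  case (Cons x xs) then show ?case using le_prod_encode_2[of "list_encode xs" x] by simp
qed simp

lemma list_encode_eq_0_iff: "list_encode xs = 0 \<longleftrightarrow> xs = []"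
  by (metis list_encode.simps(1) list_encode_eq)

lemma code_length_list_encode: "code_length (list_encode xs) = length xs"
proof -
  have "(if (code_tl ^^ t) (list_encode xs) = 0 then 0 else (1::nat)) = (if t < length xs then 1 else 0)" for t
    by (simp add: code_tl_funpow_list_encode list_encode_eq_0_iff)
  then have "code_length (list_encode xs) = min (list_encode xs) (length xs)"
    unfolding code_length_def using sum_indicator_less by simp
  then show ?thesis using length_le_list_encode[of xs] by simp
qed

lemma recfn_code_hd: "recfn n g \<Longrightarrow> recfn n (\<lambda>xs. code_hd (g xs))"
  unfolding code_hd_def by (intro recfn_fst_prod_decode recfn_pred)

lemma recfn_code_tl: "recfn n g \<Longrightarrow> recfn n (\<lambda>xs. code_tl (g xs))"
  unfolding code_tl_def by (intro recfn_snd_prod_decode recfn_pred)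

lemma recfn_code_tl_funpow: "recfn n i \<Longrightarrow> recfn n c \<Longrightarrow> recfn n (\<lambda>xs. (code_tl ^^ i xs) (c xs))"
  using recfn_funpow[of n "\<lambda>zs. code_tl (zs!0)" c i] recfn_code_tl[OF recfn_proj[of 0 "Suc n"]] by simp

lemma recfn_code_nth: "recfn n c \<Longrightarrow> recfn n i \<Longrightarrow> recfn n (\<lambda>xs. code_nth (c xs) (i xs))"
  unfolding code_nth_def by (intro recfn_code_hd recfn_code_tl_funpow)

lemma recfn_code_length: "recfn n c \<Longrightarrow> recfn n (\<lambda>xs. code_length (c xs))"
proof -
  assume c: "recfn n c"
  have "recfn n (\<lambda>xs. \<Sum>t<c xs. (\<lambda>zs. if (code_tl ^^ (zs!0)) (c (tl zs)) = 0 then 0 else 1) (t # xs))"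
    by (rule recfn_sum[OF _ c], intro recfn_If recpred_eq recfn_code_tl_funpow recfn_proj recfn_tl c recfn_const) auto
  then show ?thesis unfolding code_length_def by simp
qed

text \<open>\<open>encode_segment F l t\<close> codes \<open>F\<close> on \<open>[l - t..<l]\<close>; the segment grows to the left
  because \<open>list_encode\<close> conses at the front.\<close>

fun encode_segment :: "(nat \<Rightarrow> nat) \<Rightarrow> nat \<Rightarrow> nat \<Rightarrow> nat" where
  "encode_segment F l 0 = 0"
| "encode_segment F l (Suc t) = Suc (prod_encode (F (l - Suc t), encode_segment F l t))"

lemma encode_segment_eq: "t \<le> l \<Longrightarrow> encode_segment F l t = list_encode (map F [l - t..<l])"
proof (induction t)
  case (Suc t)
  then have "[l - Suc t..<l] = (l - Suc t) # [l - t..<l]"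
    by (simp add: upt_conv_Cons Suc_diff_Suc)
  then show ?case using Suc by simp
qed simp

lemma recfn_list_encode_map:
  assumes F: "recfn (Suc n) F" and L: "recfn n L"
  shows "recfn n (\<lambda>xs. list_encode (map (\<lambda>i. F (i # xs)) [0..<L xs]))"
proof -
  define G where "G = (\<lambda>zs::nat list. Suc (prod_encode (F ((zs!2 - Suc (zs!1)) # map ((!) zs) [3..<n+3]), zs!0)))"
  have G: "recfn (Suc (Suc (Suc n))) G"
    unfolding G_def by (intro recfn_Suc recfn_prod_encode recfn_cons_select[OF F] recfn_diff recfn_proj) auto
  have E: "recfn (Suc (Suc n)) (\<lambda>xs. prec_fun (\<lambda>_. 0) G (hd xs) (tl xs))"
    by (rule recfn_prec_hd_tl[OF recfn_zero G])
  have step: "prec_fun (\<lambda>_. 0) G t (l # ys) = encode_segment (\<lambda>i. F (i # ys)) l t" if "length ys = n" for t l ys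
  proof (induction t)
    case (Suc t)
    have "map ((!) (v # t # l # ys)) [3..<n+3] = ys" for v
    proof -
      have "[3..<n+3] = map (\<lambda>i. i + 3) [0..<n]" using map_add_upt[of 3 n] by simp
      then show ?thesis using that by (simp add: comp_def map_nth_length numeral_3_eq_3)
    qed
    then show ?case using Suc by (simp add: G_def)
  qed simp
  have "recfn n (\<lambda>xs. prec_fun (\<lambda>_. 0) G (hd (L xs # L xs # xs)) (tl (L xs # L xs # xs)))"
    by (rule recfn_cons2[OF E L L])
  then show ?thesis
    by (rule recfn_cong) (simp add: step encode_segment_eq)
qed

lemma total_rec2_iff: "total_rec2 h \<longleftrightarrow> recfn 2 (\<lambda>xs. h (xs!0) (xs!1))"
  unfolding total_rec2_def recfn_def
proof (intro iffI; elim exE; intro exI allI impI)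
  fix c and xs :: "nat list" assume "\<forall>x y. eval c [x, y] (h x y)" "length xs = (2::nat)"
  then show "eval c xs (h (xs!0) (xs!1))" using list_length_2[of xs] by metis
next
  fix c x y assume "\<forall>xs. length xs = 2 \<longrightarrow> eval c xs (h (xs!0) (xs!1))"
  then show "eval c [x, y] (h x y)" by (metis nth_Cons_0 nth_Cons_Suc One_nat_def length_Cons list.size(3) numeral_2_eq_2)
qed

lemma recfn_total_rec2: "total_rec2 h \<Longrightarrow> recfn n a \<Longrightarrow> recfn n b \<Longrightarrow> recfn n (\<lambda>xs. h (a xs) (b xs))"
  using recfn_comp2[of "\<lambda>xs. h (xs!0) (xs!1)" n a b] total_rec2_iff by simp

lemma total_rec2I: assumes "recfn 2 F" "\<And>x y. F [x,y] = h x y" shows "total_rec2 h"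
  unfolding total_rec2_iff
proof (rule recfn_cong[OF assms(1)])
  fix xs :: "nat list" assume "length xs = 2"
  then have "xs = [xs!0, xs!1]" by (rule list_length_2)
  then show "F xs = h (xs!0) (xs!1)" using assms(2) by metis
qed

lemma recfn_app2: "recfn 2 (\<lambda>xs. f (xs!0) (xs!1)) \<Longrightarrow> recfn n g \<Longrightarrow> recfn n h \<Longrightarrow> recfn n (\<lambda>xs. f (g xs) (h xs))"
  using recfn_comp2[of "\<lambda>xs. f (xs!0) (xs!1)" n g h] by simp

definition count_nz :: "(nat \<Rightarrow> nat) \<Rightarrow> nat \<Rightarrow> nat" where
  "count_nz f t = (\<Sum>i<t. if f i = 0 then 0 else 1)"

text \<open>\<open>find_nz f B k\<close> is \<open>Suc t\<close> for the position \<open>t < B\<close> of the nonzero entry of \<open>f\<close>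
  preceded by exactly \<open>k\<close> nonzero entries, and \<open>0\<close> if there is none.\<close>

definition find_nz :: "(nat \<Rightarrow> nat) \<Rightarrow> nat \<Rightarrow> nat \<Rightarrow> nat" where
  "find_nz f B k = (\<Sum>t<B. if f t \<noteq> 0 \<and> count_nz f t = k then Suc t else 0)"

lemma count_nz_mono: "t \<le> t' \<Longrightarrow> count_nz f t \<le> count_nz f t'"
  unfolding count_nz_def by (rule sum_mono2) auto

lemma count_nz_Suc: "count_nz f (Suc t) = count_nz f t + (if f t = 0 then 0 else 1)"
  unfolding count_nz_def by simp

lemma count_nz_nonzero_unique: assumes "f t \<noteq> 0" "count_nz f t = k" "f t' \<noteq> 0" "count_nz f t' = k" shows "t = t'"
proof (rule ccontr)
  assume "t \<noteq> t'"
  then consider "t < t'" | "t' < t" by linarith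
  then show False
  proof cases
    case 1
    then have "count_nz f (Suc t) \<le> count_nz f t'" by (intro count_nz_mono) auto
    then show False using assms count_nz_Suc[of f t] by simp
  next
    case 2
    then have "count_nz f (Suc t') \<le> count_nz f t" by (intro count_nz_mono) auto
    then show False using assms count_nz_Suc[of f t'] by simp
  qed
qed

lemma find_nz_found: assumes "t < B" "f t \<noteq> 0" "count_nz f t = k" shows "find_nz f B k = Suc t"
proof -
  have eq: "(if f t' \<noteq> 0 \<and> count_nz f t' = k then Suc t' else 0) = (if t' = t then Suc t else 0)" for t'
  proof (cases "f t' \<noteq> 0 \<and> count_nz f t' = k")
    case True then have "t' = t" using count_nz_nonzero_unique[of f t' k t] assms(2,3) by blast
    then show ?thesis using True by simp
  next
    case False
    then have "t' \<noteq> t" using assms(2,3) by blast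
    then show ?thesis using False by simp
  qed
  have "find_nz f B k = (\<Sum>t'<B. if t' = t then Suc t else 0)"
    unfolding find_nz_def by (simp only: eq)
  also have "\<dots> = Suc t" using assms(1) by (simp add: sum.delta')
  finally show ?thesis .
qed

lemma find_nz_none: assumes "\<forall>t<B. \<not> (f t \<noteq> 0 \<and> count_nz f t = k)" shows "find_nz f B k = 0"
  unfolding find_nz_def
proof (rule sum.neutral, rule ballI)
  fix t assume "t \<in> {..<B}"
  then have "\<not> (f t \<noteq> 0 \<and> count_nz f t = k)" using assms by blast
  then show "(if f t \<noteq> 0 \<and> count_nz f t = k then Suc t else 0) = 0" by (simp only: if_False)
qed

lemma find_nz_cases:
  "(find_nz f B k = 0 \<and> (\<forall>t<B. \<not> (f t \<noteq> 0 \<and> count_nz f t = k))) \<or> (\<exists>t<B. f t \<noteq> 0 \<and> count_nz f t = k \<and> find_nz f B k = Suc t)"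
proof (cases "\<exists>t<B. f t \<noteq> 0 \<and> count_nz f t = k")
  case True
  then obtain t where "t < B" "f t \<noteq> 0" "count_nz f t = k" by blast
  then show ?thesis using find_nz_found[of t B f k] by blast
next
  case False
  then show ?thesis using find_nz_none[of B f k] by blast
qed

lemma count_nz_cong: "(\<And>i. i < t \<Longrightarrow> f i = g i) \<Longrightarrow> count_nz f t = count_nz g t"
  unfolding count_nz_def by (rule sum.cong) auto

lemma count_nz_eq_0_iff: "count_nz g t = 0 \<longleftrightarrow> (\<forall>i<t. g i = 0)"
  unfolding count_nz_def by (auto split: if_splits)

lemma count_nz_card: "count_nz f t = card {i\<in>nzset f. i < t}"
proof -
  have "count_nz f t = card {i. i < t \<and> f i \<noteq> 0}"
    unfolding count_nz_def by (simp add: sum.If_cases Int_def conj_commute)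
  then show ?thesis by (simp add: nzset_def conj_commute)
qed

lemma enumerate_below: fixes S :: "nat set" assumes "infinite S" shows "{i\<in>S. i < enumerate S n} = enumerate S ` {..<n}"
proof
  show "{i\<in>S. i < enumerate S n} \<subseteq> enumerate S ` {..<n}"
  proof
    fix i assume "i \<in> {i\<in>S. i < enumerate S n}"
    then have i: "i \<in> S" "i < enumerate S n" by auto
    obtain k where k: "enumerate S k = i" using enumerate_Ex[OF assms i(1)] by blast
    have "enumerate S k < enumerate S n" using k i(2) by simp
    then have "k < n" using enumerate_mono_iff[OF assms] by blast
    then show "i \<in> enumerate S ` {..<n}" using k by auto
  qed
  show "enumerate S ` {..<n} \<subseteq> {i\<in>S. i < enumerate S n}"
    using assms by (auto intro: enumerate_in_set)
qed

lemma card_enumerate_below: fixes S :: "nat set" assumes "infinite S" shows "card {i\<in>S. i < enumerate S n} = n"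
proof -
  have "inj_on (enumerate S) {..<n}" using inj_on_subset[OF inj_enumerate[OF assms] subset_UNIV] .
  then show ?thesis using enumerate_below[OF assms, of n] by (simp add: card_image)
qed

lemma count_nz_enumerate: "infinite (nzset f) \<Longrightarrow> count_nz f (enumerate (nzset f) n) = n"
  by (simp add: count_nz_card card_enumerate_below)

lemma enumerate_nzset_nonzero: "infinite (nzset f) \<Longrightarrow> f (enumerate (nzset f) n) \<noteq> 0"
  using enumerate_in_set[of "nzset f" n] by (simp add: nzset_def)

lemma nonzero_count_nz_enumerate: assumes "infinite (nzset f)" "f t \<noteq> 0" "count_nz f t = k"
  shows "t = enumerate (nzset f) k"
  using count_nz_nonzero_unique[OF assms(2,3) enumerate_nzset_nonzero[OF assms(1)] count_nz_enumerate[OF assms(1)]] .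

lemma enumerate_less_count_nz: assumes "infinite (nzset f)" "k < count_nz f B" shows "enumerate (nzset f) k < B"
proof (rule ccontr)
  assume "\<not> ?thesis"
  then have "count_nz f B \<le> count_nz f (enumerate (nzset f) k)" by (intro count_nz_mono) simp
  then show False using assms count_nz_enumerate by simp
qed

lemma count_nz_unbounded: assumes "infinite (nzset f)" shows "\<exists>B. k \<le> count_nz f B"
  by (rule exI[of _ "enumerate (nzset f) k"]) (simp add: count_nz_enumerate assms)

lemma recfn_count_nz: "recfn (Suc n) F \<Longrightarrow> recfn n B \<Longrightarrow> recfn n (\<lambda>xs. count_nz (\<lambda>i. F (i # xs)) (B xs))"
  unfolding count_nz_def by (intro recfn_sum recfn_If recpred_eq recfn_const) auto

lemma recfn_find_nz:
  assumes F: "recfn (Suc n) F" and B: "recfn n B" and k: "recfn n k"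
  shows "recfn n (\<lambda>xs. find_nz (\<lambda>i. F (i # xs)) (B xs) (k xs))"
proof -
  have c: "recfn (Suc n) (\<lambda>ys. count_nz (\<lambda>i. F (i # tl ys)) (ys!0))"
    using recfn_count_nz[OF recfn_skip_second[OF F] recfn_proj[of 0 "Suc n"]] by simp
  have k': "recfn (Suc n) (\<lambda>ys. k (tl ys))" by (rule recfn_tl[OF k])
  have "recfn n (\<lambda>xs. \<Sum>t<B xs. (\<lambda>ys. if F ys \<noteq> 0 \<and> count_nz (\<lambda>i. F (i # tl ys)) (ys!0) = k (tl ys) then Suc (ys!0) else 0) (t # xs))"
    by (rule recfn_sum[OF _ B]) (intro recfn_If recpred_conj recpred_not recpred_eq F c k' recfn_Suc recfn_proj recfn_const; simp)
  then show ?thesis unfolding find_nz_def by (rule recfn_cong) (simp only: nth_Cons_0 list.sel(3))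
qed

section \<open>Computable maps on Baire space\<close>

definition is_associate :: "(nat \<Rightarrow> nat \<Rightarrow> nat) \<Rightarrow> (baire \<Rightarrow> baire option) \<Rightarrow> bool" where
  "is_associate h F \<longleftrightarrow> (\<forall>p q. F p = Some q \<longrightarrow>
        (\<forall>n. (\<exists>m. h (pref p m) n \<noteq> 0) \<and> (\<forall>m. h (pref p m) n \<noteq> 0 \<longrightarrow> h (pref p m) n = Suc (q n))))"

lemma computable_iff: "computable F \<longleftrightarrow> (\<exists>h. total_rec2 h \<and> is_associate h F)"
  unfolding computable_def is_associate_def by blast

lemma is_associateD: "is_associate h F \<Longrightarrow> F p = Some q \<Longrightarrow> h (pref p m) n \<noteq> 0 \<Longrightarrow> h (pref p m) n = Suc (q n)"
  unfolding is_associate_def by blast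

definition stable_associate :: "(nat \<Rightarrow> nat \<Rightarrow> nat) \<Rightarrow> bool" where
  "stable_associate h \<longleftrightarrow> (\<forall>p m m' n. m \<le> m' \<longrightarrow> h (pref p m) n \<noteq> 0 \<longrightarrow> h (pref p m') n = h (pref p m) n)"

lemma code_nth_pref: "i < m \<Longrightarrow> code_nth (pref p m) i = p i"
  unfolding pref_def by (simp add: code_nth_list_encode)

lemma code_length_pref: "code_length (pref p m) = m"
  unfolding pref_def by (simp add: code_length_list_encode)

lemma le_pref: "m \<le> pref p m"
  unfolding pref_def using length_le_list_encode[of "map p [0..<m]"] by simp

definition code_take :: "nat \<Rightarrow> nat \<Rightarrow> nat" where
  "code_take c j = list_encode (map (code_nth c) [0..<j])"

lemma code_take_pref: "j \<le> m \<Longrightarrow> code_take (pref p m) j = pref p j"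
  unfolding code_take_def pref_def[of p j]
  by (rule arg_cong[where f=list_encode], rule map_cong) (auto simp: code_nth_pref)

lemma pref_eqI: "(\<And>i. i < m \<Longrightarrow> p i = p' i) \<Longrightarrow> pref p m = pref p' m"
  unfolding pref_def by (rule arg_cong[where f=list_encode], rule map_cong) auto

text \<open>\<open>stabilize h\<close> answers on a prefix what \<open>h\<close> answers on the shortest subprefix on which it
  answers at all; this makes answers persist on longer prefixes.\<close>

definition stabilize :: "(nat \<Rightarrow> nat \<Rightarrow> nat) \<Rightarrow> nat \<Rightarrow> nat \<Rightarrow> nat" where
  "stabilize h c n = (let t = find_nz (\<lambda>j. h (code_take c j) n) (Suc (code_length c)) 0 in if t = 0 then 0 else h (code_take c (t - 1)) n)"

lemma total_rec2_stabilize: assumes "total_rec2 h" shows "total_rec2 (stabilize h)"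
proof -
  define G where "G = (\<lambda>ys::nat list. h (list_encode (map (\<lambda>i. code_nth (ys!1) i) [0..<ys!0])) (ys!2))"
  have G: "recfn 3 G"
  proof -
    have "recfn 3 (\<lambda>ys. list_encode (map (\<lambda>i. (\<lambda>zs. code_nth (zs!2) (zs!0)) (i # ys)) [0..<ys!0]))"
      by (rule recfn_list_encode_map) (intro recfn_code_nth recfn_proj; simp)+
    then show ?thesis unfolding G_def by (intro recfn_total_rec2[OF assms] recfn_proj) simp_all
  qed
  have K: "recfn 2 (\<lambda>xs. find_nz (\<lambda>j. G (j # xs)) (Suc (code_length (xs!0))) 0)"
    using G by (intro recfn_find_nz recfn_Suc recfn_code_length recfn_proj recfn_const) (simp_all add: numeral_3_eq_3)
  have "recfn 2 (\<lambda>xs. if find_nz (\<lambda>j. G (j # xs)) (Suc (code_length (xs!0))) 0 = 0 then 0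
          else G ((find_nz (\<lambda>j. G (j # xs)) (Suc (code_length (xs!0))) 0 - 1) # xs))"
    using G by (intro recfn_If recpred_eq K recfn_const recfn_cons[of 2 G] recfn_pred) (simp_all add: numeral_3_eq_3)
  then show ?thesis
    by (rule total_rec2I) (simp add: stabilize_def G_def code_take_def Let_def)
qed

lemma stabilize_pref:
  assumes "j0 \<le> m" "h (pref p j0) n \<noteq> 0" "\<forall>j<j0. h (pref p j) n = 0"
  shows "stabilize h (pref p m) n = h (pref p j0) n"
proof -
  let ?g = "\<lambda>j. h (code_take (pref p m) j) n"
  have g: "?g j = h (pref p j) n" if "j \<le> m" for j using that code_take_pref by simp
  have c: "count_nz ?g j0 = 0" unfolding count_nz_def using assms g by (intro sum.neutral) auto
  have "find_nz ?g (Suc (code_length (pref p m))) 0 = Suc j0"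
    using assms g c by (intro find_nz_found) (auto simp: code_length_pref)
  then show ?thesis unfolding stabilize_def using g assms by simp
qed

lemma stabilize_nonzeroD:
  assumes "stabilize h (pref p m) n \<noteq> 0"
  shows "\<exists>j0\<le>m. h (pref p j0) n \<noteq> 0 \<and> (\<forall>j<j0. h (pref p j) n = 0) \<and> stabilize h (pref p m) n = h (pref p j0) n"
proof -
  let ?g = "\<lambda>j. h (code_take (pref p m) j) n"
  have g: "?g j = h (pref p j) n" if "j \<le> m" for j using that code_take_pref by simp
  from find_nz_cases[of ?g "Suc (code_length (pref p m))" 0] assms obtain t where
    t: "t < Suc m" "?g t \<noteq> 0" "count_nz ?g t = 0" "find_nz ?g (Suc (code_length (pref p m))) 0 = Suc t"
    unfolding stabilize_def by (auto simp: code_length_pref Let_def split: if_splits)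
  have z: "\<forall>j<t. h (pref p j) n = 0"
  proof (intro allI impI)
    fix j assume "j < t"
    have "count_nz ?g (Suc j) \<le> count_nz ?g t" using \<open>j < t\<close> by (intro count_nz_mono) simp
    then have "?g j = 0" using t(3) count_nz_Suc[of ?g j] by (simp split: if_splits)
    then show "h (pref p j) n = 0" using g \<open>j < t\<close> t(1) by simp
  qed
  show ?thesis using t g z by (intro exI[of _ t]) (auto simp: stabilize_def Let_def)
qed

lemma computable_stable_associate:
  assumes "computable F"
  shows "\<exists>h. total_rec2 h \<and> is_associate h F \<and> stable_associate h"
proof -
  obtain h where h: "total_rec2 h" "is_associate h F" using assms computable_iff by blast
  have "is_associate (stabilize h) F"
    unfolding is_associate_def
  proof (intro allI impI conjI)
    fix p q n assume F: "F p = Some q"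
    obtain m0 where m0: "h (pref p m0) n \<noteq> 0" using h(2) F unfolding is_associate_def by blast
    define j0 where "j0 = (LEAST j. h (pref p j) n \<noteq> 0)"
    have j0: "h (pref p j0) n \<noteq> 0" "j0 \<le> m0" "\<forall>j<j0. h (pref p j) n = 0"
      unfolding j0_def using m0 by (auto intro: LeastI Least_le dest: not_less_Least)
    show "\<exists>m. stabilize h (pref p m) n \<noteq> 0"
      using stabilize_pref[of j0 m0 h p n] j0 by (intro exI[of _ m0]) simp
    fix m assume "stabilize h (pref p m) n \<noteq> 0"
    then obtain j where "h (pref p j) n \<noteq> 0" "stabilize h (pref p m) n = h (pref p j) n"
      using stabilize_nonzeroD by blast
    then show "stabilize h (pref p m) n = Suc (q n)" using is_associateD[OF h(2) F] by simp
  qed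
  moreover have "stable_associate (stabilize h)"
    unfolding stable_associate_def
  proof (intro allI impI)
    fix p m m' n assume mm: "m \<le> m'" "stabilize h (pref p m) n \<noteq> 0"
    then obtain j where j: "j \<le> m" "h (pref p j) n \<noteq> 0" "\<forall>i<j. h (pref p i) n = 0" "stabilize h (pref p m) n = h (pref p j) n"
      using stabilize_nonzeroD by blast
    then show "stabilize h (pref p m') n = stabilize h (pref p m) n" using stabilize_pref[of j m' h p n] mm by simp
  qed
  ultimately show ?thesis using total_rec2_stabilize[OF h(1)] by blast
qed

lemma computable_precompose:
  assumes F: "computable F" and T: "recfn 1 (\<lambda>xs. T (xs!0))"
    and Tp: "\<And>p m. D p \<Longrightarrow> T (pref p m) = pref (\<phi> p) (ell p m)"
    and unb: "\<And>p L. D p \<Longrightarrow> \<exists>m. L \<le> ell p m"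
  shows "computable (\<lambda>p. if D p then F (\<phi> p) else None)"
proof -
  obtain h where h: "total_rec2 h" "is_associate h F" "stable_associate h" using computable_stable_associate[OF F] by blast
  have tr: "total_rec2 (\<lambda>x y. h (T x) y)"
  proof (rule total_rec2I)
    show "recfn 2 (\<lambda>xs. h (T (xs!0)) (xs!1))"
      by (intro recfn_total_rec2[OF h(1)] recfn_comp1[OF T, of 2 "\<lambda>xs. xs!0", simplified] recfn_proj) simp_all
  qed simp
  have "is_associate (\<lambda>x y. h (T x) y) (\<lambda>p. if D p then F (\<phi> p) else None)"
    unfolding is_associate_def
  proof (intro allI impI conjI)
    fix p q n assume a: "(if D p then F (\<phi> p) else None) = Some q"
    then have D: "D p" and Fq: "F (\<phi> p) = Some q" by (auto split: if_splits)
    obtain M where M: "h (pref (\<phi> p) M) n \<noteq> 0" using h(2) Fq unfolding is_associate_def by blast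
    obtain m where m: "M \<le> ell p m" using unb[OF D] by blast
    have "h (pref (\<phi> p) (ell p m)) n \<noteq> 0" using h(3) M m unfolding stable_associate_def by metis
    then show "\<exists>m. h (T (pref p m)) n \<noteq> 0" using Tp[OF D] by metis
    fix m assume "h (T (pref p m)) n \<noteq> 0"
    then show "h (T (pref p m)) n = Suc (q n)" using Tp[OF D] h(2) Fq unfolding is_associate_def by metis
  qed
  then show ?thesis using tr computable_iff by blast
qed

definition Suc_seq :: "baire \<Rightarrow> baire" where "Suc_seq q i = Suc (q i)"

lemma computable_map_Suc_seq:
  assumes F: "computable F"
  shows "computable (\<lambda>p. map_option Suc_seq (F p))"
proof -
  obtain h where h: "total_rec2 h" "is_associate h F" using F computable_iff by blast
  have tr: "total_rec2 (\<lambda>x y. if h x y = 0 then 0 else Suc (h x y))"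
  proof (rule total_rec2I)
    show "recfn 2 (\<lambda>xs. if h (xs!0) (xs!1) = 0 then 0 else Suc (h (xs!0) (xs!1)))"
      by (intro recfn_If recpred_eq recfn_total_rec2[OF h(1)] recfn_proj recfn_const recfn_Suc) simp_all
  qed simp
  have "is_associate (\<lambda>x y. if h x y = 0 then 0 else Suc (h x y)) (\<lambda>p. map_option Suc_seq (F p))"
    using h(2) unfolding is_associate_def Suc_seq_def by auto
  then show ?thesis using tr computable_iff by blast
qed

text \<open>Entry \<open>n\<close> of \<open>minus1 q\<close> is read off the \<open>(n+1)\<close>-st nonzero entry of \<open>q\<close>, which is only
  trustworthy once all entries of \<open>q\<close> up to it are known.\<close>

definition minus1_associate :: "(nat \<Rightarrow> nat \<Rightarrow> nat) \<Rightarrow> nat \<Rightarrow> nat \<Rightarrow> nat" where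
  "minus1_associate h c n = (let t = find_nz (\<lambda>i. h c i - 1) c n in
     if t \<noteq> 0 \<and> count_nz (\<lambda>i. if h c i = 0 then 1 else 0) t = 0 then h c (t - 1) - 1 else 0)"

lemma total_rec2_minus1_associate: assumes "total_rec2 h" shows "total_rec2 (minus1_associate h)"
proof -
  define Fm where "Fm = (\<lambda>zs::nat list. h (zs!1) (zs!0) - 1)"
  define Zm where "Zm = (\<lambda>zs::nat list. if h (zs!1) (zs!0) = 0 then 1 else (0::nat))"
  have Fm: "recfn 3 Fm" unfolding Fm_def by (intro recfn_pred recfn_total_rec2[OF assms] recfn_proj) simp_all
  have Zm: "recfn 3 Zm" unfolding Zm_def by (intro recfn_If recpred_eq recfn_total_rec2[OF assms] recfn_proj recfn_const) simp_all
  have t: "recfn 2 (\<lambda>xs. find_nz (\<lambda>i. Fm (i # xs)) (xs!0) (xs!1))"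
    using Fm by (intro recfn_find_nz recfn_proj) (simp_all add: numeral_3_eq_3)
  have z: "recfn 2 (\<lambda>xs. count_nz (\<lambda>i. Zm (i # xs)) (find_nz (\<lambda>i. Fm (i # xs)) (xs!0) (xs!1)))"
    using Zm t by (intro recfn_count_nz) (simp_all add: numeral_3_eq_3)
  have "recfn 2 (\<lambda>xs. if find_nz (\<lambda>i. Fm (i # xs)) (xs!0) (xs!1) \<noteq> 0 \<and> count_nz (\<lambda>i. Zm (i # xs)) (find_nz (\<lambda>i. Fm (i # xs)) (xs!0) (xs!1)) = 0
      then h (xs!0) (find_nz (\<lambda>i. Fm (i # xs)) (xs!0) (xs!1) - 1) - 1 else 0)"
    by (intro recfn_If recpred_conj recpred_not recpred_eq t z recfn_const recfn_pred recfn_total_rec2[OF assms] recfn_proj) simp_all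
  then show ?thesis by (rule total_rec2I) (simp add: minus1_associate_def Fm_def Zm_def Let_def)
qed

lemma associate_uniform_prefix:
  assumes "is_associate h F" "stable_associate h" "F p = Some q"
  shows "\<exists>m. \<forall>i<k. h (pref p m) i \<noteq> 0"
proof (induction k)
  case 0 then show ?case by simp
next
  case (Suc k)
  then obtain m where m: "\<forall>i<k. h (pref p m) i \<noteq> 0" by blast
  obtain m' where m': "h (pref p m') k \<noteq> 0" using assms unfolding is_associate_def by blast
  have "\<forall>i<Suc k. h (pref p (max m m')) i \<noteq> 0"
  proof (intro allI impI)
    fix i assume "i < Suc k"
    then consider "i < k" | "i = k" by linarith
    then show "h (pref p (max m m')) i \<noteq> 0"
    proof cases
      case 1 then show ?thesis using m assms(2) unfolding stable_associate_def by (metis max.cobounded1)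
    next
      case 2 then show ?thesis using m' assms(2) unfolding stable_associate_def by (metis max.cobounded2)
    qed
  qed
  then show ?case by blast
qed

lemma minus1_associate_answers:
  assumes h: "is_associate h F" "stable_associate h" and Fq: "F p = Some q" and inf: "infinite (nzset q)"
  shows "\<exists>m. minus1_associate h (pref p m) n = Suc (minus1 q n)"
proof -
  define e where "e = enumerate (nzset q) n"
  have qe: "q e \<noteq> 0" unfolding e_def by (rule enumerate_nzset_nonzero[OF inf])
  have ce: "count_nz q e = n" unfolding e_def by (rule count_nz_enumerate[OF inf])
  have resv: "Suc (minus1 q n) = q e" using qe by (simp add: minus1_def e_def)
  obtain m0 where m0: "\<forall>i<Suc e. h (pref p m0) i \<noteq> 0" using associate_uniform_prefix[OF h Fq] by blast
  define m where "m = max m0 (Suc e)"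
  have mall: "\<forall>i<Suc e. h (pref p m) i \<noteq> 0"
    using m0 h(2) unfolding stable_associate_def m_def by (metis max.cobounded1)
  let ?c = "pref p m"
  have hc: "h ?c i = Suc (q i)" if "i \<le> e" for i
    using is_associateD[OF h(1) Fq] mall that by simp
  have ec: "e < ?c" using le_pref[of m p] unfolding m_def by linarith
  have fe: "h ?c e - 1 \<noteq> 0" using hc qe by simp
  have cf: "count_nz (\<lambda>i. h ?c i - 1) e = n" using ce hc by (subst count_nz_cong[of e _ q]) auto
  have kn: "find_nz (\<lambda>i. h ?c i - 1) ?c n = Suc e" by (rule find_nz_found[OF ec fe cf])
  have "count_nz (\<lambda>i. if h ?c i = 0 then 1 else 0) (Suc e) = 0"
    using mall unfolding count_nz_eq_0_iff by auto
  then have "minus1_associate h ?c n = Suc (minus1 q n)"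
    unfolding minus1_associate_def Let_def kn using hc resv by simp
  then show ?thesis by blast
qed

lemma minus1_associate_correct:
  assumes h: "is_associate h F" and Fq: "F p = Some q" and inf: "infinite (nzset q)"
    and nz: "minus1_associate h (pref p m) n \<noteq> 0"
  shows "minus1_associate h (pref p m) n = Suc (minus1 q n)"
proof -
  let ?c = "pref p m"
  let ?t = "find_nz (\<lambda>i. h ?c i - 1) ?c n"
  have tk: "?t \<noteq> 0" "count_nz (\<lambda>i. if h ?c i = 0 then 1 else 0) ?t = 0"
    and val: "minus1_associate h ?c n = h ?c (?t - 1) - 1"
    using nz unfolding minus1_associate_def Let_def by (auto split: if_splits)
  from find_nz_cases[of "\<lambda>i. h ?c i - 1" ?c n] tk(1) obtain e where
    e: "h ?c e - 1 \<noteq> 0" "count_nz (\<lambda>i. h ?c i - 1) e = n" "?t = Suc e" by auto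
  have nonzero: "h ?c i \<noteq> 0" if "i < Suc e" for i
  proof -
    have "(if h ?c i = 0 then 1 else (0::nat)) = 0" using tk(2) e(3) that unfolding count_nz_eq_0_iff by simp
    then show ?thesis by (simp split: if_splits)
  qed
  have hc: "h ?c i = Suc (q i)" if "i \<le> e" for i
    using is_associateD[OF h Fq nonzero] that by simp
  have qe: "q e \<noteq> 0" using e(1) hc by simp
  have ce: "count_nz q e = n" using e(2) hc by (subst (asm) count_nz_cong[of e _ q]) auto
  have "e = enumerate (nzset q) n" by (rule nonzero_count_nz_enumerate[OF inf qe ce])
  then have "Suc (minus1 q n) = q e" using qe by (simp add: minus1_def)
  then show ?thesis using val e(3) hc by simp
qed

lemma computable_minus1_output:
  assumes "computable F"
  shows "computable (\<lambda>p. case F p of None \<Rightarrow> None | Some q \<Rightarrow> if infinite (nzset q) then Some (minus1 q) else None)"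
proof -
  obtain h where h: "total_rec2 h" "is_associate h F" "stable_associate h"
    using computable_stable_associate[OF assms] by blast
  have "is_associate (minus1_associate h)
      (\<lambda>p. case F p of None \<Rightarrow> None | Some q \<Rightarrow> if infinite (nzset q) then Some (minus1 q) else None)"
    unfolding is_associate_def
  proof (intro allI impI)
    fix p q' n assume "(case F p of None \<Rightarrow> None | Some q \<Rightarrow> if infinite (nzset q) then Some (minus1 q) else None) = Some q'"
    then obtain q where Fq: "F p = Some q" and inf: "infinite (nzset q)" and q': "q' = minus1 q"
      by (auto split: option.splits if_splits)
    show "(\<exists>m. minus1_associate h (pref p m) n \<noteq> 0) \<and>
        (\<forall>m. minus1_associate h (pref p m) n \<noteq> 0 \<longrightarrow> minus1_associate h (pref p m) n = Suc (q' n))"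
      using minus1_associate_answers[OF h(2,3) Fq inf, of n] minus1_associate_correct[OF h(2) Fq inf] q'
      by (metis nat.distinct(1))
  qed
  then show ?thesis using total_rec2_minus1_associate[OF h(1)] computable_iff by blast
qed

lemma computable_pointwise:
  assumes F: "computable F" and psi: "recfn 2 (\<lambda>xs. \<psi> (xs!0) (xs!1))"
  shows "computable (\<lambda>p. F (\<lambda>i. \<psi> i (p i)))"
proof -
  define T where "T = (\<lambda>c. list_encode (map (\<lambda>i. \<psi> i (code_nth c i)) [0..<code_length c]))"
  have T: "recfn 1 (\<lambda>xs. T (xs!0))"
  proof -
    have a: "recfn (Suc 1) (\<lambda>zs. \<psi> (zs!0) (code_nth (zs!1) (zs!0)))"
      by (intro recfn_app2[OF psi] recfn_code_nth recfn_proj) simp_all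
    have "recfn 1 (\<lambda>xs. list_encode (map (\<lambda>i. (\<lambda>zs. \<psi> (zs!0) (code_nth (zs!1) (zs!0))) (i # xs)) [0..<code_length (xs!0)]))"
      by (rule recfn_list_encode_map[OF a]) (intro recfn_code_length recfn_proj; simp)
    then show ?thesis unfolding T_def by simp
  qed
  have Tp: "T (pref p m) = pref (\<lambda>i. \<psi> i (p i)) m" for p m
    unfolding T_def code_length_pref pref_def[of "\<lambda>i. \<psi> i (p i)"]
    by (rule arg_cong[where f=list_encode], rule map_cong) (auto simp: code_nth_pref)
  have "computable (\<lambda>p. if True then F (\<lambda>i. \<psi> i (p i)) else None)"
    by (rule computable_precompose[OF F T, of "\<lambda>_. True" "\<lambda>p i. \<psi> i (p i)" "\<lambda>p m. m"]) (auto simp: Tp)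
  then show ?thesis by simp
qed

definition evens :: "baire \<Rightarrow> baire" where "evens s j = s (2 * j)"

definition odds :: "baire \<Rightarrow> baire" where "odds s j = s (Suc (2 * j))"

lemma evens_bpair [simp]: "evens (bpair p r) = p"
  unfolding evens_def bpair_def by auto

lemma odds_bpair [simp]: "odds (bpair p r) = r"
  unfolding odds_def bpair_def by auto

definition odd_entry_code :: "nat \<Rightarrow> nat \<Rightarrow> nat" where
  "odd_entry_code c j = (if Suc (2 * j) < code_length c then code_nth c (Suc (2 * j)) else 0)"

definition unpair_minus1_code :: "nat \<Rightarrow> nat" where
  "unpair_minus1_code c = list_encode (map (\<lambda>i. if even i then code_nth c i else code_nth c (Suc (2 * (find_nz (odd_entry_code c) (code_length c div 2) (i div 2) - 1))) - 1)
      [0..<min (code_length c) (2 * count_nz (odd_entry_code c) (code_length c div 2))])"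

lemma recfn_odd_entry_code: "recfn 2 (\<lambda>xs. odd_entry_code (xs!0) (xs!1))"
  unfolding odd_entry_code_def by (intro recfn_If recpred_less recfn_Suc recfn_mult recfn_const recfn_proj recfn_code_length recfn_code_nth) simp_all

lemma recfn_unpair_minus1_code: "recfn 1 (\<lambda>xs. unpair_minus1_code (xs!0))"
proof -
  have f1: "recfn 2 (\<lambda>zs. odd_entry_code (zs!1) (zs!0))" by (intro recfn_app2[OF recfn_odd_entry_code] recfn_proj) simp_all
  have f2: "recfn 3 (\<lambda>zs. odd_entry_code (zs!2) (zs!0))" by (intro recfn_app2[OF recfn_odd_entry_code] recfn_proj) simp_all
  have c1: "recfn 1 (\<lambda>xs. count_nz (\<lambda>i. odd_entry_code (xs!0) i) (code_length (xs!0) div 2))"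
    using recfn_count_nz[of 1 "\<lambda>zs. odd_entry_code (zs!1) (zs!0)" "\<lambda>xs. code_length (xs!0) div 2"] f1
      recfn_div2[OF recfn_code_length[OF recfn_proj[of 0 1]]] by (simp add: numeral_2_eq_2)
  have kn: "recfn 2 (\<lambda>ys. find_nz (\<lambda>i. odd_entry_code (ys!1) i) (code_length (ys!1) div 2) (ys!0 div 2))"
    using recfn_find_nz[of 2 "\<lambda>zs. odd_entry_code (zs!2) (zs!0)" "\<lambda>ys. code_length (ys!1) div 2" "\<lambda>ys. ys!0 div 2"] f2
      recfn_div2[OF recfn_code_length[OF recfn_proj[of 1 2]]] recfn_div2[OF recfn_proj[of 0 2]] by (simp add: numeral_3_eq_3 numeral_2_eq_2)
  have body: "recfn 2 (\<lambda>ys. if even (ys!0) then code_nth (ys!1) (ys!0) else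
        code_nth (ys!1) (Suc (2 * (find_nz (\<lambda>i. odd_entry_code (ys!1) i) (code_length (ys!1) div 2) (ys!0 div 2) - 1))) - 1)"
    by (intro recfn_If recpred_even recfn_code_nth recfn_pred recfn_Suc recfn_mult recfn_const kn recfn_proj) simp_all
  have L: "recfn 1 (\<lambda>xs. min (code_length (xs!0)) (2 * count_nz (\<lambda>i. odd_entry_code (xs!0) i) (code_length (xs!0) div 2)))"
    by (intro recfn_min recfn_code_length recfn_proj recfn_mult recfn_const c1) simp
  have "recfn 1 (\<lambda>xs. list_encode (map (\<lambda>i. (\<lambda>ys. if even (ys!0) then code_nth (ys!1) (ys!0) else
        code_nth (ys!1) (Suc (2 * (find_nz (\<lambda>i. odd_entry_code (ys!1) i) (code_length (ys!1) div 2) (ys!0 div 2) - 1))) - 1) (i # xs))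
      [0..<min (code_length (xs!0)) (2 * count_nz (\<lambda>i. odd_entry_code (xs!0) i) (code_length (xs!0) div 2))]))"
    by (rule recfn_list_encode_map[OF _ L]) (use body in \<open>simp add: numeral_2_eq_2\<close>)
  then show ?thesis unfolding unpair_minus1_code_def by (rule recfn_cong) (simp add: One_nat_def cong: if_cong)
qed

lemma unpair_minus1_code_pref:
  assumes inf: "infinite (nzset (odds s))"
  shows "unpair_minus1_code (pref s m) = pref (bpair (evens s) (minus1 (odds s))) (min m (2 * count_nz (odds s) (m div 2)))"
proof -
  let ?r = "odds s" and ?c = "pref s m"
  have odd_entry_code: "odd_entry_code ?c j = ?r j" if "j < m div 2" for j
  proof -
    have "Suc (2 * j) < m" using that by linarith
    then show ?thesis by (simp add: odd_entry_code_def code_length_pref code_nth_pref odds_def)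
  qed
  have K: "count_nz (odd_entry_code ?c) (m div 2) = count_nz ?r (m div 2)" by (rule count_nz_cong) (simp add: odd_entry_code)
  let ?L = "min m (2 * count_nz ?r (m div 2))"
  have "(if even i then code_nth ?c i else code_nth ?c (Suc (2 * (find_nz (odd_entry_code ?c) (m div 2) (i div 2) - 1))) - 1)
        = bpair (evens s) (minus1 ?r) i" if i: "i < ?L" for i
  proof (cases "even i")
    case True
    then have "code_nth ?c i = s i" using i by (simp add: code_nth_pref)
    then show ?thesis using True by (simp add: bpair_def evens_def)
  next
    case False
    define k where "k = i div 2"
    have kK: "k < count_nz ?r (m div 2)" using i False unfolding k_def by linarith
    define e where "e = enumerate (nzset ?r) k"
    have em: "e < m div 2" unfolding e_def by (rule enumerate_less_count_nz[OF inf kK])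
    have re: "?r e \<noteq> 0" unfolding e_def by (rule enumerate_nzset_nonzero[OF inf])
    have ce: "count_nz (odd_entry_code ?c) e = k"
    proof -
      have "count_nz (odd_entry_code ?c) e = count_nz ?r e" by (rule count_nz_cong) (use em odd_entry_code in auto)
      then show ?thesis using count_nz_enumerate[OF inf] e_def by simp
    qed
    have kn: "find_nz (odd_entry_code ?c) (m div 2) k = Suc e"
      by (rule find_nz_found[OF em]) (use odd_entry_code[OF em] re ce in auto)
    have "Suc (2 * e) < m" using em by linarith
    then have "code_nth ?c (Suc (2 * e)) = ?r e" by (simp add: code_nth_pref odds_def)
    then show ?thesis using False kn by (simp add: k_def[symmetric] bpair_def minus1_def e_def)
  qed
  then show ?thesis
    unfolding unpair_minus1_code_def code_length_pref K pref_def[of "bpair _ _"]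
    by (intro arg_cong[where f=list_encode] map_cong) auto
qed

lemma computable_minus1_odds:
  assumes F: "computable F"
  shows "computable (\<lambda>s. if infinite (nzset (odds s)) then F (bpair (evens s) (minus1 (odds s))) else None)"
proof (rule computable_precompose[OF F recfn_unpair_minus1_code])
  fix s m assume "infinite (nzset (odds s))"
  then show "unpair_minus1_code (pref s m) = pref (bpair (evens s) (minus1 (odds s))) (min m (2 * count_nz (odds s) (m div 2)))"
    by (rule unpair_minus1_code_pref)
next
  fix s L assume inf: "infinite (nzset (odds s))"
  obtain B where B: "L \<le> count_nz (odds s) B" using count_nz_unbounded[OF inf] by blast
  have "count_nz (odds s) B \<le> count_nz (odds s) ((2 * B + L) div 2)" by (rule count_nz_mono) simp
  then show "\<exists>m. L \<le> min m (2 * count_nz (odds s) (m div 2))" using B by (intro exI[of _ "2 * B + L"]) simp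
qed

lemma computable_continuous:
  assumes "computable H" "H s = Some q"
  obtains m where "\<And>s' q'. \<forall>i<m. s' i = s i \<Longrightarrow> H s' = Some q' \<Longrightarrow> q' n = q n"
proof -
  obtain h where h: "total_rec2 h" "is_associate h H" using assms(1) computable_iff by blast
  obtain m where m: "h (pref s m) n \<noteq> 0" using h(2) assms(2) unfolding is_associate_def by blast
  have "q' n = q n" if "\<forall>i<m. s' i = s i" "H s' = Some q'" for s' q'
  proof -
    have "pref s' m = pref s m" by (rule pref_eqI) (use that in auto)
    then show ?thesis using h(2) assms(2) that(2) m unfolding is_associate_def by (metis Suc_inject)
  qed
  then show ?thesis by (rule that)
qed

lemma bpair_agree: "(\<forall>i<m. p' i = p i) \<Longrightarrow> (\<forall>i<m. r' i = r i) \<Longrightarrow> \<forall>i<m. bpair p' r' i = bpair p r i"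
  unfolding bpair_def by auto

definition patch :: "baire \<Rightarrow> nat \<Rightarrow> baire \<Rightarrow> baire" where "patch p0 m p i = (if i < m then p0 i else p i)"

lemma patch_agree: "\<forall>i<m. patch p0 m p i = p0 i" by (simp add: patch_def)

lemma computable_patch:
  assumes "computable F"
  shows "computable (\<lambda>p. F (patch p0 m p))"
proof -
  have eq: "patch p0 m p = (\<lambda>i. (\<lambda>i v. if i < m then code_nth (list_encode (map p0 [0..<m])) i else v) i (p i))" for p
    by (rule ext) (simp add: patch_def code_nth_list_encode)
  have "computable (\<lambda>p. F (\<lambda>i. (\<lambda>i v. if i < m then code_nth (list_encode (map p0 [0..<m])) i else v) i (p i)))"
    by (rule computable_pointwise[OF assms]) (intro recfn_If recpred_less recfn_proj recfn_const recfn_code_nth; simp)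
  then show ?thesis by (simp only: eq)
qed

lemma computable_patch_evens: assumes "computable H"
  shows "computable (\<lambda>s. H (bpair (patch p0 m (evens s)) (odds s)))"
proof -
  have eq: "bpair (patch p0 m (evens s)) (odds s) =
    (\<lambda>i. (\<lambda>i v. if even i \<and> i div 2 < m then code_nth (list_encode (map p0 [0..<m])) (i div 2) else v) i (s i))" for s
  proof (rule ext)
    fix i show "bpair (patch p0 m (evens s)) (odds s) i = (if even i \<and> i div 2 < m then code_nth (list_encode (map p0 [0..<m])) (i div 2) else s i)"
      by (cases "even i"; cases "i div 2 < m") (auto simp: bpair_def patch_def evens_def odds_def code_nth_list_encode)
  qed
  have "computable (\<lambda>s. H (\<lambda>i. (\<lambda>i v. if even i \<and> i div 2 < m then code_nth (list_encode (map p0 [0..<m])) (i div 2) else v) i (s i)))"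
    by (rule computable_pointwise[OF assms]) (intro recfn_If recpred_conj recpred_even recpred_less recfn_div2 recfn_proj recfn_const recfn_code_nth; simp)
  then show ?thesis by (simp only: eq)
qed

lemma computable_patch_evens_Suc: assumes "computable H"
  shows "computable (\<lambda>s. H (bpair (patch p0 m (evens s)) (Suc_seq (odds s))))"
proof -
  have eq: "bpair (patch p0 m (evens s)) (Suc_seq (odds s)) =
    (\<lambda>i. (\<lambda>i v. if even i then (if i div 2 < m then code_nth (list_encode (map p0 [0..<m])) (i div 2) else v) else Suc v) i (s i))" for s
  proof (rule ext)
    fix i show "bpair (patch p0 m (evens s)) (Suc_seq (odds s)) i = (if even i then (if i div 2 < m then code_nth (list_encode (map p0 [0..<m])) (i div 2) else s i) else Suc (s i))"
      by (cases "even i"; cases "i div 2 < m") (auto simp: bpair_def patch_def evens_def odds_def code_nth_list_encode Suc_seq_def)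
  qed
  have "computable (\<lambda>s. H (\<lambda>i. (\<lambda>i v. if even i then (if i div 2 < m then code_nth (list_encode (map p0 [0..<m])) (i div 2) else v) else Suc v) i (s i)))"
    by (rule computable_pointwise[OF assms]) (intro recfn_If recpred_even recpred_less recfn_div2 recfn_proj recfn_const recfn_code_nth recfn_Suc; simp)
  then show ?thesis by (simp only: eq)
qed

section \<open>Limits and jumps\<close>

lemma eventually_le_prod_encode: "\<forall>\<^sub>F n in sequentially. m \<le> prod_encode (n, j)"
  unfolding eventually_sequentially using le_prod_encode_1 order_trans by blast

lemma lim_baireI:
  assumes "\<forall>j. \<forall>\<^sub>F n in sequentially. p (prod_encode (n, j)) = q j"
  shows "lim_baire p = Some q"
proof -
  have th: "(THE a. \<forall>\<^sub>F n in sequentially. p (prod_encode (n, j)) = a) = q j" for j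
  proof (rule the_equality)
    show "\<forall>\<^sub>F n in sequentially. p (prod_encode (n, j)) = q j" using assms by blast
    fix a assume "\<forall>\<^sub>F n in sequentially. p (prod_encode (n, j)) = a"
    then have "\<forall>\<^sub>F n in sequentially. a = q j" using assms[rule_format, of j]
      by (rule eventually_elim2) simp
    then show "a = q j" by simp
  qed
  show ?thesis unfolding lim_baire_def using assms th by auto
qed

lemma lim_baire_cong:
  assumes "\<forall>j. \<forall>\<^sub>F n in sequentially. p (prod_encode (n, j)) = p' (prod_encode (n, j))"
  shows "lim_baire p = lim_baire p'"
proof -
  have th: "(\<forall>\<^sub>F n in sequentially. p (prod_encode (n, j)) = a) \<longleftrightarrow> (\<forall>\<^sub>F n in sequentially. p' (prod_encode (n, j)) = a)" for j a
  proof
    assume "\<forall>\<^sub>F n in sequentially. p (prod_encode (n, j)) = a"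
    then show "\<forall>\<^sub>F n in sequentially. p' (prod_encode (n, j)) = a"
      using assms[rule_format, of j] by (rule eventually_elim2) simp
  next
    assume "\<forall>\<^sub>F n in sequentially. p' (prod_encode (n, j)) = a"
    then show "\<forall>\<^sub>F n in sequentially. p (prod_encode (n, j)) = a"
      using assms[rule_format, of j] by (rule eventually_elim2) simp
  qed
  have ex: "(\<exists>a. \<forall>\<^sub>F n in sequentially. p (prod_encode (n, j)) = a) \<longleftrightarrow> (\<exists>a. \<forall>\<^sub>F n in sequentially. p' (prod_encode (n, j)) = a)" for j
    using th by blast
  show ?thesis unfolding lim_baire_def using ex th by simp
qed

text \<open>\<open>const_seq q\<close> is the tupled sequence \<open>\<langle>q, q, q, \<dots>\<rangle>\<close>; \<open>splice_seq p m q\<close> agrees with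
  \<open>p\<close> below \<open>m\<close> and with \<open>const_seq q\<close> above, so it still converges to \<open>q\<close>.\<close>

definition const_seq :: "baire \<Rightarrow> baire" where "const_seq q i = q (snd (prod_decode i))"

definition splice_seq :: "baire \<Rightarrow> nat \<Rightarrow> baire \<Rightarrow> baire" where "splice_seq p m q i = (if i < m then p i else const_seq q i)"

lemma lim_baire_const_seq: "lim_baire (const_seq q) = Some q"
  by (rule lim_baireI) (simp add: const_seq_def)

lemma lim_baire_splice_seq: "lim_baire (splice_seq p m q) = Some q"
proof (rule lim_baireI, rule allI)
  fix j show "\<forall>\<^sub>F n in sequentially. splice_seq p m q (prod_encode (n, j)) = q j"
    using eventually_le_prod_encode[of m j] by (rule eventually_mono) (simp add: splice_seq_def const_seq_def)
qed

lemma lim_baire_patch: "lim_baire (patch p0 m p) = lim_baire p"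
proof (rule lim_baire_cong, rule allI)
  fix j show "\<forall>\<^sub>F n in sequentially. patch p0 m p (prod_encode (n, j)) = p (prod_encode (n, j))"
    using eventually_le_prod_encode[of m j] by (rule eventually_mono) (simp add: patch_def)
qed

lemma jump_rep_const_seq: "dX q = Some x \<Longrightarrow> jump_rep dX (const_seq q) = Some x"
  by (simp add: jump_rep_def lim_baire_const_seq)

lemma jump_rep_splice_seq: "dX q = Some x \<Longrightarrow> jump_rep dX (splice_seq p m q) = Some x"
  by (simp add: jump_rep_def lim_baire_splice_seq)

lemma jump_rep_patch: "jump_rep dX (patch p0 m p) = jump_rep dX p"
  by (simp add: jump_rep_def lim_baire_patch)

lemma splice_seq_agree: "\<forall>i<m. splice_seq p m q i = p i" by (simp add: splice_seq_def)

definition wcomp :: "(baire \<Rightarrow> baire option) \<Rightarrow> (baire \<Rightarrow> baire option) \<Rightarrow> (baire \<Rightarrow> baire option) \<Rightarrow> baire \<Rightarrow> baire option" where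
  "wcomp K G H p = (case K p of None \<Rightarrow> None | Some k \<Rightarrow> (case G k of None \<Rightarrow> None | Some r \<Rightarrow> H (bpair p r)))"

lemma W_red_iff: "W_red dX dY f dU dV g \<longleftrightarrow>
  (\<exists>H K. computable H \<and> computable K \<and> (\<forall>G. realizes dU dV G g \<longrightarrow> realizes dX dY (wcomp K G H) f))"
  unfolding W_red_def wcomp_def by simp

lemma wcomp_SomeD: "wcomp K G H p = Some q \<Longrightarrow> \<exists>k r. K p = Some k \<and> G k = Some r \<and> H (bpair p r) = Some q"
  unfolding wcomp_def by (auto split: option.splits)

lemma wcomp_eq: "K p = Some k \<Longrightarrow> G k = Some r \<Longrightarrow> wcomp K G H p = H (bpair p r)"
  unfolding wcomp_def by simp

lemma pdom_sv: "pdom (sv f) = dom f"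
  unfolding pdom_def sv_def by (auto split: option.splits)

lemma sv_iff: "y \<in> sv f x \<longleftrightarrow> f x = Some y"
  unfolding sv_def by (cases "f x") auto

lemma rep_S_iff: "rep_S q = Some b \<longleftrightarrow> b = (\<exists>n. q n \<noteq> 0)"
  unfolding rep_S_def by auto

definition choice_realizer :: "'u rep \<Rightarrow> 'v rep \<Rightarrow> ('u \<Rightarrow> 'v set) \<Rightarrow> baire \<Rightarrow> baire option" where
  "choice_realizer dU dV g p = (case dU p of None \<Rightarrow> None | Some x \<Rightarrow>
      if (\<exists>q y. dV q = Some y \<and> y \<in> g x) then Some (SOME q. \<exists>y. dV q = Some y \<and> y \<in> g x) else None)"

lemma choice_realizer_realizes:
  assumes "\<And>x. x \<in> pdom g \<Longrightarrow> g x \<subseteq> ran dV"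
  shows "realizes dU dV (choice_realizer dU dV g) g"
  unfolding realizes_def
proof (intro allI impI)
  fix p x assume x: "dU p = Some x \<and> x \<in> pdom g"
  then obtain y q where "y \<in> g x" "dV q = Some y" using assms unfolding pdom_def ran_def by blast
  then have ex: "\<exists>q y. dV q = Some y \<and> y \<in> g x" by blast
  then have "\<exists>y. dV (SOME q. \<exists>y. dV q = Some y \<and> y \<in> g x) = Some y \<and> y \<in> g x"
    by (rule someI_ex[where P="\<lambda>q. \<exists>y. dV q = Some y \<and> y \<in> g x"])
  then show "\<exists>q y. choice_realizer dU dV g p = Some q \<and> dV q = Some y \<and> y \<in> g x"
    using x ex unfolding choice_realizer_def by auto
qed

lemma choice_realizer_name:
  assumes "choice_realizer dU dV g k = Some r"
  shows "\<exists>y. dV r = Some y"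
proof -
  obtain x where ex: "\<exists>q y. dV q = Some y \<and> y \<in> g x"
    and r: "r = (SOME q. \<exists>y. dV q = Some y \<and> y \<in> g x)"
    using assms unfolding choice_realizer_def by (auto split: option.splits if_splits)
  have "\<exists>y. dV r = Some y \<and> y \<in> g x" unfolding r
    using ex by (rule someI_ex[where P="\<lambda>q. \<exists>y. dV q = Some y \<and> y \<in> g x"])
  then show ?thesis by blast
qed

section \<open>Completions\<close>

definition pad :: "nat \<Rightarrow> baire \<Rightarrow> baire" where
  "pad m w i = (if i < m then 0 else w (i - m))"

lemma pad_0 [simp]: "pad 0 w = w"
  by (simp add: pad_def fun_eq_iff)

lemma enumerate_atLeast: "enumerate {m::nat..} n = m + n"
proof (induction n)
  case 0 then show ?case by (simp add: enumerate_0 Least_equality)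
next
  case (Suc n)
  have "enumerate {m::nat..} (Suc n) = (LEAST s. s \<in> {m..} \<and> enumerate {m..} n < s)"
    by (rule enumerate_Suc'') (simp add: infinite_Ici)
  also have "\<dots> = m + Suc n" using Suc by (intro Least_equality) auto
  finally show ?case .
qed

lemma nzset_pad_Suc_seq: "nzset (pad m (Suc_seq q)) = {m..}"
  by (auto simp: nzset_def pad_def Suc_seq_def)

lemma minus1_pad_Suc_seq: "minus1 (pad m (Suc_seq q)) = q"
  by (rule ext) (simp add: minus1_def nzset_pad_Suc_seq enumerate_atLeast pad_def Suc_seq_def)

lemma completion_pad_Suc_seq: "completion dU (pad m (Suc_seq q)) = Some (dU q)"
  unfolding completion_def nzset_pad_Suc_seq minus1_pad_Suc_seq by (auto simp: infinite_Ici)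

lemma completion_Suc_seq: "completion dU (Suc_seq q) = Some (dU q)"
  using completion_pad_Suc_seq[of dU 0 q] by simp

lemma completion_zero: "completion dU (\<lambda>_. 0) = Some None"
  by (simp add: completion_def nzset_def)

lemma completion_SomeD: "completion dU k = Some (Some u) \<Longrightarrow> infinite (nzset k) \<and> dU (minus1 k) = Some u"
  unfolding completion_def by (auto split: if_splits)

lemma completion_in_carrier_bar: "\<exists>z. completion dV r = Some z \<and> z \<in> carrier_bar dV"
  unfolding completion_def carrier_bar_def by (auto simp: ran_def)

lemma carrier_bar_subset_ran_completion: "carrier_bar dV \<subseteq> ran (completion dV)"
proof -
  have "None \<in> ran (completion dV)" using completion_zero by (force simp: ran_def)
  moreover have "Some v \<in> ran (completion dV)" if "dV q = Some v" for q v
    using completion_Suc_seq[of dV q] that by (force simp: ran_def)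
  ultimately show ?thesis unfolding carrier_bar_def ran_def by blast
qed

lemma pdom_cbar: "x \<in> pdom (cbar dV g)"
  unfolding pdom_def cbar_def carrier_bar_def by (auto split: option.splits)

lemma cbar_improper: "\<not> (\<exists>u. y = Some u \<and> u \<in> pdom g) \<Longrightarrow> cbar dV g y = carrier_bar dV"
  unfolding cbar_def by (auto split: option.splits)

lemma cbar_proper: "u \<in> pdom g \<Longrightarrow> cbar dV g (Some u) = Some ` g u"
  unfolding cbar_def by simp

lemma cbar_subset_carrier_bar: "problem dU dV g \<Longrightarrow> cbar dV g y \<subseteq> carrier_bar dV"
  unfolding cbar_def carrier_bar_def problem_def pdom_def
  by (auto split: option.splits if_splits)

definition proper_instance :: "'u rep \<Rightarrow> ('u \<Rightarrow> 'v set) \<Rightarrow> baire \<Rightarrow> bool" where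
  "proper_instance dU g k \<longleftrightarrow> (\<exists>u. completion dU k = Some (Some u) \<and> u \<in> pdom g)"

lemma choice_realizer_cbar:
  assumes "problem dU dV g"
  shows "realizes (completion dU) (completion dV) (choice_realizer (completion dU) (completion dV) (cbar dV g)) (cbar dV g)"
  by (rule choice_realizer_realizes)
    (use cbar_subset_carrier_bar[OF assms] carrier_bar_subset_ran_completion in blast)

lemma realizes_cbar_proper:
  assumes G: "realizes (completion dU) (completion dV) G (cbar dV g)"
    and u: "completion dU k = Some (Some u)" "u \<in> pdom g"
  obtains r v where "G k = Some r" "infinite (nzset r)" "dV (minus1 r) = Some v" "v \<in> g u"
proof -
  obtain r z where r: "G k = Some r" "completion dV r = Some z" "z \<in> cbar dV g (Some u)"
    using G u(1) pdom_cbar unfolding realizes_def by blast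
  then obtain v where "z = Some v" "v \<in> g u" using cbar_proper[OF u(2)] by auto
  then show ?thesis using that r completion_SomeD[of dV r v] by auto
qed

lemma realizes_cbar_fun_upd:
  assumes G: "realizes (completion dU) (completion dV) G (cbar dV g)" and k: "\<not> proper_instance dU g k"
  shows "realizes (completion dU) (completion dV) (G(k := Some r)) (cbar dV g)"
  unfolding realizes_def
proof (intro allI impI)
  fix p y assume y: "completion dU p = Some y \<and> y \<in> pdom (cbar dV g)"
  show "\<exists>q z. (G(k := Some r)) p = Some q \<and> completion dV q = Some z \<and> z \<in> cbar dV g y"
  proof (cases "p = k")
    case True
    then have "\<not> (\<exists>u. y = Some u \<and> u \<in> pdom g)" using k y unfolding proper_instance_def by blast
    then have "cbar dV g y = carrier_bar dV" by (rule cbar_improper)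
    moreover obtain z where "completion dV r = Some z" "z \<in> carrier_bar dV"
      using completion_in_carrier_bar by blast
    ultimately show ?thesis using True by simp
  next
    case False
    then show ?thesis using G y unfolding realizes_def by simp
  qed
qed

text \<open>Padding the answers at proper instances with \<open>m\<close> leading zeros keeps them valid, and
  makes every answer of the resulting realizer begin with \<open>m\<close> zeros.\<close>

lemma realizes_cbar_padded:
  assumes G: "realizes (completion dU) (completion dV) G (cbar dV g)"
  shows "realizes (completion dU) (completion dV)
    (\<lambda>k. if proper_instance dU g k then map_option (\<lambda>r. pad m (Suc_seq (minus1 r))) (G k) else Some (\<lambda>_. 0))
    (cbar dV g)"
  unfolding realizes_def
proof (intro allI impI)
  fix k y assume y: "completion dU k = Some y \<and> y \<in> pdom (cbar dV g)"
  show "\<exists>q z. (if proper_instance dU g k then map_option (\<lambda>r. pad m (Suc_seq (minus1 r))) (G k) else Some (\<lambda>_. 0)) = Some q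
      \<and> completion dV q = Some z \<and> z \<in> cbar dV g y"
  proof (cases "proper_instance dU g k")
    case True
    then obtain u where u: "completion dU k = Some (Some u)" "u \<in> pdom g" unfolding proper_instance_def by blast
    obtain r v where r: "G k = Some r" "dV (minus1 r) = Some v" "v \<in> g u"
      using realizes_cbar_proper[OF G u] .
    have "y = Some u" using u(1) y by simp
    then have "Some v \<in> cbar dV g y" using r(3) cbar_proper[OF u(2)] by simp
    then show ?thesis using True r(1,2) by (simp add: completion_pad_Suc_seq)
  next
    case False
    then have "\<not> (\<exists>u. y = Some u \<and> u \<in> pdom g)" using y unfolding proper_instance_def by blast
    then have "cbar dV g y = carrier_bar dV" by (rule cbar_improper)
    then show ?thesis using False completion_zero[of dV] by (simp add: carrier_bar_def)
  qed
qed

lemma W_red_cbar_if_W_red: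
  assumes "W_red dX dY f dU dV g"
  shows "W_red dX dY f (completion dU) (completion dV) (cbar dV g)"
proof -
  obtain H K where H: "computable H" and K: "computable K"
    and red: "\<forall>G. realizes dU dV G g \<longrightarrow> realizes dX dY (wcomp K G H) f"
    using assms unfolding W_red_iff by blast
  define K' where "K' = (\<lambda>p. map_option Suc_seq (K p))"
  define H' where "H' = (\<lambda>s. if infinite (nzset (odds s)) then H (bpair (evens s) (minus1 (odds s))) else None)"
  have "realizes dX dY (wcomp K' G' H') f"
    if G': "realizes (completion dU) (completion dV) G' (cbar dV g)" for G'
  proof -
    define G where "G = (\<lambda>k. case G' (Suc_seq k) of None \<Rightarrow> None
      | Some r \<Rightarrow> if infinite (nzset r) then Some (minus1 r) else None)"
    have "realizes dU dV G g"
      unfolding realizes_def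
    proof (intro allI impI)
      fix k x assume x: "dU k = Some x \<and> x \<in> pdom g"
      then obtain r v where "G' (Suc_seq k) = Some r" "infinite (nzset r)" "dV (minus1 r) = Some v" "v \<in> g x"
        using realizes_cbar_proper[OF G', of "Suc_seq k" x] by (auto simp: completion_Suc_seq)
      then show "\<exists>q y. G k = Some q \<and> dV q = Some y \<and> y \<in> g x" unfolding G_def by simp
    qed
    then have R: "realizes dX dY (wcomp K G H) f" using red by blast
    have "wcomp K' G' H' p = wcomp K G H p" if "wcomp K G H p \<noteq> None" for p
      using that unfolding wcomp_def K'_def H'_def G_def by (auto split: option.splits if_splits)
    then show ?thesis using R unfolding realizes_def by fastforce
  qed
  moreover have "computable K'" unfolding K'_def by (rule computable_map_Suc_seq[OF K])
  moreover have "computable H'" unfolding H'_def by (rule computable_minus1_odds[OF H])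
  ultimately show ?thesis unfolding W_red_iff by blast
qed

lemma realizes_Ttot: "realizes dU dV G (Ttot dV g) \<Longrightarrow> realizes dU dV G g"
  unfolding realizes_def Ttot_def pdom_def by (metis (mono_tags, lifting) mem_Collect_eq)

section \<open>Reductions which may answer bad instances arbitrarily\<close>

text \<open>This covers both the completion and the totalization of the target problem: in either
  case a realizer may answer a bad instance by any name satisfying \<open>okr\<close>.\<close>

locale bad_instance_reduction =
  fixes dX :: "'x rep" and dY :: "'y rep" and f :: "'x \<Rightarrow> 'y set"
    and K H :: "baire \<Rightarrow> baire option" and R :: "(baire \<Rightarrow> baire option) \<Rightarrow> bool"
    and Gz :: "baire \<Rightarrow> baire option" and good okr :: "baire \<Rightarrow> bool"
  assumes realizes_wcomp: "R G \<Longrightarrow> realizes dX dY (wcomp K G H) f"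
    and computable_H: "computable H"
    and R_Gz: "R Gz"
    and R_fun_upd: "\<not> good k \<Longrightarrow> okr r \<Longrightarrow> R (Gz(k := Some r))"
    and okr_Gz: "Gz k = Some r \<Longrightarrow> okr r"
begin

lemma answer_at_bad_instance:
  assumes r: "okr r" and x: "dX p = Some x" "x \<in> pdom f" and bad: "\<not> (\<exists>k. K p = Some k \<and> good k)"
  shows "\<exists>q y. H (bpair p r) = Some q \<and> dY q = Some y \<and> y \<in> f x"
proof -
  obtain q0 where "wcomp K Gz H p = Some q0"
    using realizes_wcomp[OF R_Gz] x unfolding realizes_def by blast
  then obtain k where k: "K p = Some k" using wcomp_SomeD by blast
  then have "R (Gz(k := Some r))" using bad r R_fun_upd by blast
  then obtain q y where "wcomp K (Gz(k := Some r)) H p = Some q" "dY q = Some y" "y \<in> f x"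
    using realizes_wcomp x unfolding realizes_def by blast
  then show ?thesis using k by (simp add: wcomp_eq)
qed

lemma answer_at_name:
  assumes "dX pa = Some a" "a \<in> pdom f"
  obtains r q y where "okr r" "H (bpair pa r) = Some q" "dY q = Some y" "y \<in> f a"
proof -
  obtain q y where q: "wcomp K Gz H pa = Some q" "dY q = Some y" "y \<in> f a"
    using realizes_wcomp[OF R_Gz] assms unfolding realizes_def by blast
  then obtain k r where "Gz k = Some r" "H (bpair pa r) = Some q"
    using wcomp_SomeD by blast
  then show ?thesis using that okr_Gz q(2,3) by blast
qed

text \<open>Redirecting a bad instance to the name \<open>r\<close> used at \<open>pa\<close> makes \<open>H\<close> answer with input
  \<open>bpair p r\<close>; by continuity of \<open>H\<close>, that answer agrees with the one at \<open>pa\<close> at any given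
  position once \<open>p\<close> is close enough to \<open>pa\<close>.\<close>

lemma answer_near_bad_instances:
  assumes r: "okr r" and qa: "H (bpair pa r) = Some qa"
  obtains m where "\<And>p x. \<forall>i<m. p i = pa i \<Longrightarrow> dX p = Some x \<Longrightarrow> x \<in> pdom f \<Longrightarrow>
      \<not> (\<exists>k. K p = Some k \<and> good k) \<Longrightarrow>
      \<exists>q y. H (bpair p r) = Some q \<and> q n = qa n \<and> dY q = Some y \<and> y \<in> f x"
proof -
  obtain m where m: "\<And>s q. \<forall>i<m. s i = bpair pa r i \<Longrightarrow> H s = Some q \<Longrightarrow> q n = qa n"
    by (erule computable_continuous[where s="bpair pa r", OF computable_H qa])
  have "\<exists>q y. H (bpair p r) = Some q \<and> q n = qa n \<and> dY q = Some y \<and> y \<in> f x"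
    if p: "\<forall>i<m. p i = pa i" and x: "dX p = Some x" "x \<in> pdom f"
      and bad: "\<not> (\<exists>k. K p = Some k \<and> good k)" for p x
  proof -
    obtain q y where q: "H (bpair p r) = Some q" "dY q = Some y" "y \<in> f x"
      using answer_at_bad_instance[OF r x bad] by blast
    moreover have "q n = qa n" using m[OF bpair_agree[OF p] q(1)] by simp
    ultimately show ?thesis by blast
  qed
  then show ?thesis by (rule that)
qed

end

definition good_on_cylinder :: "'x rep \<Rightarrow> (baire \<Rightarrow> baire option) \<Rightarrow> (baire \<Rightarrow> bool) \<Rightarrow> ('x \<Rightarrow> bool) \<Rightarrow> baire \<Rightarrow> nat \<Rightarrow> bool" where
  "good_on_cylinder dX K good P p0 m \<longleftrightarrow>
     (\<forall>p x. (\<forall>i<m. p i = p0 i) \<longrightarrow> dX p = Some x \<longrightarrow> P x \<longrightarrow> (\<exists>k. K p = Some k \<and> good k))"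

lemma good_on_cylinderD:
  "good_on_cylinder dX K good P p0 m \<Longrightarrow> \<forall>i<m. p i = p0 i \<Longrightarrow> dX p = Some x \<Longrightarrow> P x \<Longrightarrow>
    \<exists>k. K p = Some k \<and> good k"
  unfolding good_on_cylinder_def by blast

lemma good_near_name_nat:
  assumes "bad_instance_reduction dX rep_nat (sv f) K H R Gz good okr"
    and a: "dX pa = Some a" "a \<in> dom f"
  obtains m where "good_on_cylinder dX K good (\<lambda>x. x \<in> dom f \<and> f x \<noteq> f a) pa m"
proof -
  interpret bad_instance_reduction dX rep_nat "sv f" K H R Gz good okr by fact
  have a': "a \<in> pdom (sv f)" using a(2) by (simp add: pdom_sv)
  obtain r qa y where r: "okr r" "H (bpair pa r) = Some qa" and "rep_nat qa = Some y" "y \<in> sv f a"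
    by (erule answer_at_name[OF a(1) a'])
  then have fa: "f a = Some (qa 0)" by (simp add: rep_nat_def sv_iff)
  obtain m where m: "\<And>p x. \<forall>i<m. p i = pa i \<Longrightarrow> dX p = Some x \<Longrightarrow> x \<in> pdom (sv f) \<Longrightarrow>
      \<not> (\<exists>k. K p = Some k \<and> good k) \<Longrightarrow>
      \<exists>q y. H (bpair p r) = Some q \<and> q 0 = qa 0 \<and> rep_nat q = Some y \<and> y \<in> sv f x"
    by (erule answer_near_bad_instances[OF r])
  have "good_on_cylinder dX K good (\<lambda>x. x \<in> dom f \<and> f x \<noteq> f a) pa m"
    unfolding good_on_cylinder_def
  proof (intro allI impI)
    fix p x assume p: "\<forall>i<m. p i = pa i" and x: "dX p = Some x" and fx: "x \<in> dom f \<and> f x \<noteq> f a"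
    show "\<exists>k. K p = Some k \<and> good k"
    proof (rule ccontr)
      assume "\<not> (\<exists>k. K p = Some k \<and> good k)"
      moreover have "x \<in> pdom (sv f)" using fx by (simp add: pdom_sv)
      ultimately obtain q y where "q 0 = qa 0" "rep_nat q = Some y" "y \<in> sv f x"
        using m[OF p x] by blast
      then have "f x = f a" using fa by (simp add: rep_nat_def sv_iff)
      then show False using fx by simp
    qed
  qed
  then show ?thesis by (rule that)
qed

text \<open>Improper instances near a name of \<open>a\<close> only occur at points \<open>x\<close> with \<open>f x = f a\<close>; continuing
  that prefix with a name of some \<open>b\<close> with \<open>f b \<noteq> f a\<close> leads to a cylinder without any.\<close>

lemma good_cylinder_nat:
  assumes red: "bad_instance_reduction (jump_rep dX) rep_nat (sv f) K H R Gz good okr"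
    and "dom f \<subseteq> ran dX" and "\<exists>a\<in>dom f. \<exists>b\<in>dom f. f a \<noteq> f b"
  obtains p0 m where "good_on_cylinder (jump_rep dX) K good (\<lambda>x. x \<in> dom f) p0 m"
proof -
  obtain a b qa qb where ab: "a \<in> dom f" "b \<in> dom f" "f a \<noteq> f b" "dX qa = Some a" "dX qb = Some b"
    using assms(2,3) unfolding ran_def by blast
  obtain m1 where m1: "good_on_cylinder (jump_rep dX) K good (\<lambda>x. x \<in> dom f \<and> f x \<noteq> f a) (const_seq qa) m1"
    using good_near_name_nat[where dX="jump_rep dX", OF red jump_rep_const_seq[of dX, OF ab(4)] ab(1)] .
  define pb where "pb = splice_seq (const_seq qa) m1 qb"
  have jb: "jump_rep dX pb = Some b" unfolding pb_def by (rule jump_rep_splice_seq[of dX, OF ab(5)])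
  obtain m2 where m2: "good_on_cylinder (jump_rep dX) K good (\<lambda>x. x \<in> dom f \<and> f x \<noteq> f b) pb m2"
    using good_near_name_nat[where dX="jump_rep dX", OF red jb ab(2)] .
  have "good_on_cylinder (jump_rep dX) K good (\<lambda>x. x \<in> dom f) pb (max m1 m2)"
    unfolding good_on_cylinder_def
  proof (intro allI impI)
    fix p x assume p: "\<forall>i<max m1 m2. p i = pb i" and x: "jump_rep dX p = Some x" "x \<in> dom f"
    show "\<exists>k. K p = Some k \<and> good k"
    proof (cases "f x = f a")
      case True
      have "\<forall>i<m2. p i = pb i" using p by simp
      moreover note x(1)
      moreover have "x \<in> dom f \<and> f x \<noteq> f b" using x(2) True ab(3) by simp
      ultimately show ?thesis by (rule good_on_cylinderD[OF m2])
    next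
      case False
      have "\<forall>i<m1. p i = const_seq qa i" using p splice_seq_agree[of m1 "const_seq qa" qb] by (auto simp: pb_def)
      moreover note x(1)
      moreover have "x \<in> dom f \<and> f x \<noteq> f a" using x(2) False by simp
      ultimately show ?thesis by (rule good_on_cylinderD[OF m1])
    qed
  qed
  then show ?thesis by (rule that)
qed

lemma good_near_true_name:
  assumes "bad_instance_reduction dX rep_S (sv fS) K H R Gz good okr"
    and t: "dX pt = Some t" "fS t = Some True"
  obtains m where "good_on_cylinder dX K good (\<lambda>x. fS x = Some False) pt m"
proof -
  interpret bad_instance_reduction dX rep_S "sv fS" K H R Gz good okr by fact
  have t': "t \<in> pdom (sv fS)" using t(2) by (simp add: pdom_sv domIff)
  obtain r qt y where r: "okr r" "H (bpair pt r) = Some qt" and "rep_S qt = Some y" "y \<in> sv fS t"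
    by (erule answer_at_name[OF t(1) t'])
  then obtain n where n: "qt n \<noteq> 0" using t(2) by (auto simp: sv_iff rep_S_iff)
  obtain m where m: "\<And>p x. \<forall>i<m. p i = pt i \<Longrightarrow> dX p = Some x \<Longrightarrow> x \<in> pdom (sv fS) \<Longrightarrow>
      \<not> (\<exists>k. K p = Some k \<and> good k) \<Longrightarrow>
      \<exists>q y. H (bpair p r) = Some q \<and> q n = qt n \<and> rep_S q = Some y \<and> y \<in> sv fS x"
    by (erule answer_near_bad_instances[OF r])
  have "good_on_cylinder dX K good (\<lambda>x. fS x = Some False) pt m"
    unfolding good_on_cylinder_def
  proof (intro allI impI)
    fix p x assume p: "\<forall>i<m. p i = pt i" and x: "dX p = Some x" and fx: "fS x = Some False"
    show "\<exists>k. K p = Some k \<and> good k"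
    proof (rule ccontr)
      assume "\<not> (\<exists>k. K p = Some k \<and> good k)"
      moreover have "x \<in> pdom (sv fS)" using fx by (simp add: pdom_sv domIff)
      ultimately obtain q y where "q n = qt n" "rep_S q = Some y" "y \<in> sv fS x"
        using m[OF p x] by blast
      then show False using n fx by (auto simp: rep_S_iff sv_iff)
    qed
  qed
  then show ?thesis by (rule that)
qed

text \<open>An improper instance at a point where \<open>fS\<close> is true could be answered by the zero sequence;
  the resulting positive answer is fixed by a finite prefix of the answer, so the padded realizer,
  which answers everything with that prefix of zeros, would make \<open>H\<close> accept a name of a false point.\<close>

lemma proper_at_true_point:
  fixes dU :: "'u rep" and dV :: "'v rep" and g :: "'u \<Rightarrow> 'v set"
  assumes "bad_instance_reduction (jump_rep dX) rep_S (sv fS) K H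
      (\<lambda>G. realizes (completion dU) (completion dV) G (cbar dV g)) Gz (proper_instance dU g) (\<lambda>_. True)"
    and fl: "dX qf = Some fl" "fS fl = Some False"
    and x: "jump_rep dX p = Some x" "fS x = Some True"
  shows "\<exists>k. K p = Some k \<and> proper_instance dU g k"
proof (rule ccontr)
  interpret bad_instance_reduction "jump_rep dX" rep_S "sv fS" K H
      "\<lambda>G. realizes (completion dU) (completion dV) G (cbar dV g)" Gz "proper_instance dU g" "\<lambda>_. True"
    by fact
  assume bad: "\<not> (\<exists>k. K p = Some k \<and> proper_instance dU g k)"
  have "x \<in> pdom (sv fS)" using x(2) by (simp add: pdom_sv domIff)
  then obtain q y where q: "H (bpair p (\<lambda>_. 0)) = Some q" "rep_S q = Some y" "y \<in> sv fS x"
    using answer_at_bad_instance[OF TrueI x(1) _ bad] by blast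
  then obtain n where n: "q n \<noteq> 0" using x(2) by (auto simp: sv_iff rep_S_iff)
  obtain m where m: "\<And>s q'. \<forall>i<m. s i = bpair p (\<lambda>_. 0) i \<Longrightarrow> H s = Some q' \<Longrightarrow> q' n = q n"
    by (erule computable_continuous[where s="bpair p (\<lambda>_. 0)", OF computable_H q(1)])
  define G where "G = (\<lambda>k. if proper_instance dU g k then map_option (\<lambda>r. pad m (Suc_seq (minus1 r))) (Gz k)
      else Some (\<lambda>_. 0))"
  have "realizes (completion dU) (completion dV) G (cbar dV g)"
    unfolding G_def by (rule realizes_cbar_padded[OF R_Gz])
  then have "realizes (jump_rep dX) rep_S (wcomp K G H) (sv fS)" by (rule realizes_wcomp)
  moreover have "jump_rep dX (splice_seq p m qf) = Some fl" using fl(1) by (rule jump_rep_splice_seq[of dX])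
  moreover have "fl \<in> pdom (sv fS)" using fl(2) by (simp add: pdom_sv domIff)
  ultimately obtain q' y' where q': "wcomp K G H (splice_seq p m qf) = Some q'" "rep_S q' = Some y'" "y' \<in> sv fS fl"
    unfolding realizes_def by blast
  then obtain k r where r: "G k = Some r" "H (bpair (splice_seq p m qf) r) = Some q'"
    using wcomp_SomeD by blast
  have "\<forall>i<m. r i = 0" using r(1) unfolding G_def by (auto simp: pad_def split: if_splits)
  then have "\<forall>i<m. bpair (splice_seq p m qf) r i = bpair p (\<lambda>_. 0) i"
    using splice_seq_agree[of m p qf] by (intro bpair_agree) auto
  then have "q' n = q n" using r(2) by (rule m)
  then show False using q' n fl(2) by (auto simp: rep_S_iff sv_iff)
qed

lemma good_cylinder_S:
  fixes dU :: "'u rep" and dV :: "'v rep" and g :: "'u \<Rightarrow> 'v set"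
  assumes red: "bad_instance_reduction (jump_rep dX) rep_S (sv fS) K H
      (\<lambda>G. realizes (completion dU) (completion dV) G (cbar dV g)) Gz (proper_instance dU g) (\<lambda>_. True)"
    and "dom fS \<subseteq> ran dX" and "\<exists>a\<in>dom fS. \<exists>b\<in>dom fS. fS a \<noteq> fS b"
  obtains p0 m where "good_on_cylinder (jump_rep dX) K (proper_instance dU g) (\<lambda>x. x \<in> dom fS) p0 m"
proof -
  have "\<exists>t fl. fS t = Some True \<and> fS fl = Some False"
  proof -
    obtain a b va vb where "fS a = Some va" "fS b = Some vb" "va \<noteq> vb" using assms(3) by auto
    then show ?thesis by (cases va; cases vb) auto
  qed
  then obtain t fl where tf: "fS t = Some True" "fS fl = Some False" by blast
  then have "t \<in> ran dX" "fl \<in> ran dX" using assms(2) by auto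
  then obtain qt qf where qt: "dX qt = Some t" and qf: "dX qf = Some fl" unfolding ran_def by blast
  obtain m where m: "good_on_cylinder (jump_rep dX) K (proper_instance dU g) (\<lambda>x. fS x = Some False) (const_seq qt) m"
    using good_near_true_name[where dX="jump_rep dX", OF red jump_rep_const_seq[of dX, OF qt] tf(1)] .
  have "good_on_cylinder (jump_rep dX) K (proper_instance dU g) (\<lambda>x. x \<in> dom fS) (const_seq qt) m"
    unfolding good_on_cylinder_def
  proof (intro allI impI)
    fix p x assume p: "\<forall>i<m. p i = const_seq qt i" and x: "jump_rep dX p = Some x" "x \<in> dom fS"
    then obtain v where v: "fS x = Some v" by blast
    show "\<exists>k. K p = Some k \<and> proper_instance dU g k"
    proof (cases v)
      case True
      then show ?thesis using v proper_at_true_point[where dX=dX, OF red qf tf(2) x(1)] by simp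
    next
      case False
      then have "fS x = Some False" using v by simp
      with p x(1) show ?thesis by (rule good_on_cylinderD[OF m])
    qed
  qed
  then show ?thesis by (rule that)
qed

text \<open>Names of the jump may begin with an arbitrary finite prefix, so \<open>K\<close> can be made to see the
  good cylinder on every input.\<close>

lemma W_red_of_good_cylinder_Ttot:
  assumes H: "computable H" and K: "computable K"
    and red: "\<forall>G. realizes dU dV G (Ttot dV g) \<longrightarrow> realizes (jump_rep dX) dY (wcomp K G H) f"
    and Gz: "realizes dU dV Gz (Ttot dV g)"
    and good: "good_on_cylinder (jump_rep dX) K (\<lambda>k. \<exists>u. dU k = Some u \<and> u \<in> pdom g) (\<lambda>x. x \<in> pdom f) p0 m"
  shows "W_red (jump_rep dX) dY f dU dV g"
proof -
  define K' where "K' = (\<lambda>p. K (patch p0 m p))"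
  define H' where "H' = (\<lambda>s. H (bpair (patch p0 m (evens s)) (odds s)))"
  have "realizes (jump_rep dX) dY (wcomp K' G H') f" if G: "realizes dU dV G g" for G
  proof -
    define G' where "G' = (\<lambda>k. if \<exists>u. dU k = Some u \<and> u \<in> pdom g then G k else Gz k)"
    have "realizes dU dV G' (Ttot dV g)"
      unfolding realizes_def
    proof (intro allI impI)
      fix k u assume u: "dU k = Some u \<and> u \<in> pdom (Ttot dV g)"
      show "\<exists>q y. G' k = Some q \<and> dV q = Some y \<and> y \<in> Ttot dV g u"
      proof (cases "u \<in> pdom g")
        case True
        then show ?thesis using G u unfolding realizes_def G'_def Ttot_def by auto
      next
        case False
        then show ?thesis using Gz u unfolding realizes_def G'_def by auto
      qed
    qed
    then have R: "realizes (jump_rep dX) dY (wcomp K G' H) f" using red by blast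
    show ?thesis unfolding realizes_def
    proof (intro allI impI)
      fix p x assume x: "jump_rep dX p = Some x \<and> x \<in> pdom f"
      then have jp: "jump_rep dX (patch p0 m p) = Some x" by (simp add: jump_rep_patch)
      then obtain k where k: "K (patch p0 m p) = Some k" "\<exists>u. dU k = Some u \<and> u \<in> pdom g"
        using good patch_agree x unfolding good_on_cylinder_def by blast
      have "wcomp K' G H' p = wcomp K G' H (patch p0 m p)"
        unfolding wcomp_def K'_def H'_def G'_def using k by (simp split: option.splits)
      then show "\<exists>q y. wcomp K' G H' p = Some q \<and> dY q = Some y \<and> y \<in> f x"
        using R jp x unfolding realizes_def by auto
    qed
  qed
  moreover have "computable K'" unfolding K'_def by (rule computable_patch[OF K])
  moreover have "computable H'" unfolding H'_def by (rule computable_patch_evens[OF H])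
  ultimately show ?thesis unfolding W_red_iff by blast
qed

lemma W_red_of_good_cylinder_cbar:
  assumes H: "computable H" and K: "computable K"
    and red: "\<forall>G. realizes (completion dU) (completion dV) G (cbar dV g) \<longrightarrow> realizes (jump_rep dX) dY (wcomp K G H) f"
    and Gz: "realizes (completion dU) (completion dV) Gz (cbar dV g)"
    and good: "good_on_cylinder (jump_rep dX) K (proper_instance dU g) (\<lambda>x. x \<in> pdom f) p0 m"
  shows "W_red (jump_rep dX) dY f dU dV g"
proof -
  define K' where "K' = (\<lambda>p. case K (patch p0 m p) of None \<Rightarrow> None
    | Some q \<Rightarrow> if infinite (nzset q) then Some (minus1 q) else None)"
  define H' where "H' = (\<lambda>s. H (bpair (patch p0 m (evens s)) (Suc_seq (odds s))))"
  have "realizes (jump_rep dX) dY (wcomp K' G H') f" if G: "realizes dU dV G g" for G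
  proof -
    define G' where "G' = (\<lambda>k. if proper_instance dU g k then map_option Suc_seq (G (minus1 k)) else Gz k)"
    have "realizes (completion dU) (completion dV) G' (cbar dV g)"
      unfolding realizes_def
    proof (intro allI impI)
      fix k y assume y: "completion dU k = Some y \<and> y \<in> pdom (cbar dV g)"
      show "\<exists>q z. G' k = Some q \<and> completion dV q = Some z \<and> z \<in> cbar dV g y"
      proof (cases "proper_instance dU g k")
        case True
        then obtain u where u: "completion dU k = Some (Some u)" "u \<in> pdom g"
          unfolding proper_instance_def by blast
        then obtain q v where "G (minus1 k) = Some q" "dV q = Some v" "v \<in> g u"
          using G completion_SomeD[OF u(1)] unfolding realizes_def by blast
        then show ?thesis using True u y cbar_proper[OF u(2)]
          by (auto simp: G'_def completion_Suc_seq)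
      next
        case False
        then show ?thesis using Gz y unfolding realizes_def G'_def by simp
      qed
    qed
    then have R: "realizes (jump_rep dX) dY (wcomp K G' H) f" using red by blast
    show ?thesis unfolding realizes_def
    proof (intro allI impI)
      fix p x assume x: "jump_rep dX p = Some x \<and> x \<in> pdom f"
      then have jp: "jump_rep dX (patch p0 m p) = Some x" by (simp add: jump_rep_patch)
      then obtain k where k: "K (patch p0 m p) = Some k" "proper_instance dU g k"
        using good patch_agree x unfolding good_on_cylinder_def by blast
      then obtain u where "completion dU k = Some (Some u)" unfolding proper_instance_def by blast
      then have "infinite (nzset k)" by (simp add: completion_SomeD)
      then have "wcomp K' G H' p = wcomp K G' H (patch p0 m p)"
        unfolding wcomp_def K'_def H'_def G'_def using k by (simp split: option.splits)
      then show "\<exists>q y. wcomp K' G H' p = Some q \<and> dY q = Some y \<and> y \<in> f x"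
        using R jp x unfolding realizes_def by auto
    qed
  qed
  moreover have "computable K'" unfolding K'_def by (rule computable_minus1_output[OF computable_patch[OF K]])
  moreover have "computable H'" unfolding H'_def by (rule computable_patch_evens_Suc[OF H])
  ultimately show ?thesis unfolding W_red_iff by blast
qed

section \<open>Co-completeness and co-totality of jumps\<close>

lemma realizes_Ttot_fun_upd:
  assumes G: "realizes dU dV G (Ttot dV g)" and k: "\<not> (\<exists>u. dU k = Some u \<and> u \<in> pdom g)"
    and r: "\<exists>y. dV r = Some y"
  shows "realizes dU dV (G(k := Some r)) (Ttot dV g)"
  using assms unfolding realizes_def Ttot_def by (auto simp: ran_def)

lemma co_total_jump_nat:
  fixes f :: "'x \<Rightarrow> nat option"
  assumes "dom f \<subseteq> ran dX" and "\<exists>a\<in>dom f. \<exists>b\<in>dom f. f a \<noteq> f b"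
  shows "co_total TYPE('u) TYPE('v) (jump_rep dX) rep_nat (sv f)"
  unfolding co_total_def
proof (intro allI impI iffI)
  fix dU :: "'u rep" and dV :: "'v rep" and g :: "'u \<Rightarrow> 'v set"
  assume prob: "problem dU dV g" and "W_red (jump_rep dX) rep_nat (sv f) dU dV (Ttot dV g)"
  then obtain H K where H: "computable H" and K: "computable K"
    and red: "\<forall>G. realizes dU dV G (Ttot dV g) \<longrightarrow> realizes (jump_rep dX) rep_nat (wcomp K G H) (sv f)"
    unfolding W_red_iff by blast
  define Gz where "Gz = choice_realizer dU dV (Ttot dV g)"
  have Gz: "realizes dU dV Gz (Ttot dV g)"
    unfolding Gz_def using prob by (intro choice_realizer_realizes) (auto simp: problem_def Ttot_def)
  have bad: "bad_instance_reduction (jump_rep dX) rep_nat (sv f) K H (\<lambda>G. realizes dU dV G (Ttot dV g)) Gz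
      (\<lambda>k. \<exists>u. dU k = Some u \<and> u \<in> pdom g) (\<lambda>r. \<exists>y. dV r = Some y)"
  proof unfold_locales
    show "realizes (jump_rep dX) rep_nat (wcomp K G H) (sv f)" if "realizes dU dV G (Ttot dV g)" for G
      using red that by blast
    show "realizes dU dV (Gz(k := Some r)) (Ttot dV g)"
      if "\<not> (\<exists>u. dU k = Some u \<and> u \<in> pdom g)" "\<exists>y. dV r = Some y" for k r
      using realizes_Ttot_fun_upd[where dU=dU and dV=dV, OF Gz that] .
    show "\<exists>y. dV r = Some y" if "Gz k = Some r" for k r
      using that unfolding Gz_def by (rule choice_realizer_name[where dV=dV])
  qed (fact H Gz)+
  obtain p0 m where "good_on_cylinder (jump_rep dX) K (\<lambda>k. \<exists>u. dU k = Some u \<and> u \<in> pdom g) (\<lambda>x. x \<in> dom f) p0 m"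
    using good_cylinder_nat[where dX=dX, OF bad assms] .
  then show "W_red (jump_rep dX) rep_nat (sv f) dU dV g"
    using W_red_of_good_cylinder_Ttot[OF H K red Gz, of p0 m] by (simp add: pdom_sv)
next
  fix dU :: "'u rep" and dV :: "'v rep" and g :: "'u \<Rightarrow> 'v set"
  assume "W_red (jump_rep dX) rep_nat (sv f) dU dV g"
  then show "W_red (jump_rep dX) rep_nat (sv f) dU dV (Ttot dV g)"
    unfolding W_red_iff using realizes_Ttot by blast
qed

lemma co_complete_jump_of_good_cylinder:
  assumes "\<And>(dU :: 'u rep) (dV :: 'v rep) g K H Gz. problem dU dV g \<Longrightarrow>
      bad_instance_reduction (jump_rep dX) dY f K H (\<lambda>G. realizes (completion dU) (completion dV) G (cbar dV g))
        Gz (proper_instance dU g) (\<lambda>_. True) \<Longrightarrow>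
      \<exists>p0 m. good_on_cylinder (jump_rep dX) K (proper_instance dU g) (\<lambda>x. x \<in> pdom f) p0 m"
  shows "co_complete TYPE('u) TYPE('v) (jump_rep dX) dY f"
  unfolding co_complete_def
proof (intro allI impI iffI)
  fix dU :: "'u rep" and dV :: "'v rep" and g :: "'u \<Rightarrow> 'v set"
  assume prob: "problem dU dV g" and "W_red (jump_rep dX) dY f (completion dU) (completion dV) (cbar dV g)"
  then obtain H K where H: "computable H" and K: "computable K"
    and red: "\<forall>G. realizes (completion dU) (completion dV) G (cbar dV g) \<longrightarrow> realizes (jump_rep dX) dY (wcomp K G H) f"
    unfolding W_red_iff by blast
  define Gz where "Gz = choice_realizer (completion dU) (completion dV) (cbar dV g)"
  have Gz: "realizes (completion dU) (completion dV) Gz (cbar dV g)"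
    unfolding Gz_def by (rule choice_realizer_cbar[OF prob])
  have "bad_instance_reduction (jump_rep dX) dY f K H (\<lambda>G. realizes (completion dU) (completion dV) G (cbar dV g))
      Gz (proper_instance dU g) (\<lambda>_. True)"
  proof unfold_locales
    show "realizes (jump_rep dX) dY (wcomp K G H) f" if "realizes (completion dU) (completion dV) G (cbar dV g)" for G
      using red that by blast
    show "realizes (completion dU) (completion dV) (Gz(k := Some r)) (cbar dV g)" if "\<not> proper_instance dU g k" for k r
      using realizes_cbar_fun_upd[where dU=dU and g=g, OF Gz that] .
  qed (simp_all add: H Gz)
  then obtain p0 m where "good_on_cylinder (jump_rep dX) K (proper_instance dU g) (\<lambda>x. x \<in> pdom f) p0 m"
    using assms[OF prob] by blast
  then show "W_red (jump_rep dX) dY f dU dV g" by (rule W_red_of_good_cylinder_cbar[OF H K red Gz])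
next
  fix dU :: "'u rep" and dV :: "'v rep" and g :: "'u \<Rightarrow> 'v set"
  assume "W_red (jump_rep dX) dY f dU dV g"
  then show "W_red (jump_rep dX) dY f (completion dU) (completion dV) (cbar dV g)"
    by (rule W_red_cbar_if_W_red)
qed

lemma co_complete_jump_nat:
  fixes f :: "'x \<Rightarrow> nat option"
  assumes "dom f \<subseteq> ran dX" and "\<exists>a\<in>dom f. \<exists>b\<in>dom f. f a \<noteq> f b"
  shows "co_complete TYPE('u) TYPE('v) (jump_rep dX) rep_nat (sv f)"
proof (rule co_complete_jump_of_good_cylinder)
  fix dU :: "'u rep" and dV :: "'v rep" and g K H Gz
  assume bad: "bad_instance_reduction (jump_rep dX) rep_nat (sv f) K H
    (\<lambda>G. realizes (completion dU) (completion dV) G (cbar dV g)) Gz (proper_instance dU g) (\<lambda>_. True)"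
  obtain p0 m where "good_on_cylinder (jump_rep dX) K (proper_instance dU g) (\<lambda>x. x \<in> dom f) p0 m"
    using good_cylinder_nat[where dX=dX, OF bad assms] .
  then show "\<exists>p0 m. good_on_cylinder (jump_rep dX) K (proper_instance dU g) (\<lambda>x. x \<in> pdom (sv f)) p0 m"
    by (auto simp: pdom_sv)
qed

lemma co_complete_jump_S:
  fixes fS :: "'x \<Rightarrow> bool option"
  assumes "dom fS \<subseteq> ran dX" and "\<exists>a\<in>dom fS. \<exists>b\<in>dom fS. fS a \<noteq> fS b"
  shows "co_complete TYPE('u) TYPE('v) (jump_rep dX) rep_S (sv fS)"
proof (rule co_complete_jump_of_good_cylinder)
  fix dU :: "'u rep" and dV :: "'v rep" and g K H Gz
  assume bad: "bad_instance_reduction (jump_rep dX) rep_S (sv fS) K H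
    (\<lambda>G. realizes (completion dU) (completion dV) G (cbar dV g)) Gz (proper_instance dU g) (\<lambda>_. True)"
  obtain p0 m where "good_on_cylinder (jump_rep dX) K (proper_instance dU g) (\<lambda>x. x \<in> dom fS) p0 m"
    using good_cylinder_S[where dX=dX, OF bad assms] .
  then show "\<exists>p0 m. good_on_cylinder (jump_rep dX) K (proper_instance dU g) (\<lambda>x. x \<in> pdom (sv fS)) p0 m"
    by (auto simp: pdom_sv)
qed

theorem proposition4p19:
  fixes dX :: "'x rep" and f :: "'x \<Rightarrow> nat option" and fS :: "'x \<Rightarrow> bool option"
  assumes "dom f \<subseteq> ran dX" and "\<exists>a\<in>dom f. \<exists>b\<in>dom f. f a \<noteq> f b"
    and "dom fS \<subseteq> ran dX" and "\<exists>a\<in>dom fS. \<exists>b\<in>dom fS. fS a \<noteq> fS b"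
  shows "co_complete TYPE('u) TYPE('v) (jump_rep dX) rep_nat (sv f)
       \<and> co_total TYPE('u) TYPE('v) (jump_rep dX) rep_nat (sv f)
       \<and> co_complete TYPE('u) TYPE('v) (jump_rep dX) rep_S (sv fS)"
  using co_complete_jump_nat[OF assms(1,2)] co_total_jump_nat[OF assms(1,2)] co_complete_jump_S[OF assms(3,4)]
  by blast

end
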